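(* Let $a>0$, $b>-1$, $0<\sigma<\infty$, $1<p<\infty$, and let $V\in MH(p)$. Then there is a constant $C>0$ such that for every $f\in L^p_{\rm loc}(\mathbb H)$ $$\sum_{k=1}^\infty \left( \int_{\Delta_k} |S^k_{a,b}f(z)|^p V(z)\, dm(z) \right)^{\sigma/p} \leq C \sum_{k=1}^\infty \left(\int_{\Delta_k} |f(z)|^p V(z)\, dm(z) \right)^{\sigma/p},$$ where $dm$ is Lebesgue measure on $\mathbb H$.
   Context: $\mathbb H=\{(x,t): x\in\mathbb R^n,\ t>0\}\subset\mathbb R^{n+1}$; points are written $z=(x,t)$, $w=(y,s)$, and $\overline z=(x,-t)$. $\{\Delta_k\}_{k\ge1}$ is a fixed family of closed cubes in $\mathbb H$ with sides parallel to the coordinate axes such that: $\bigcup_k\Delta_k=\mathbb H$ and ${\rm diam}\,\Delta_k\asymp{\rm dist}(\Delta_k,\partial\mathbb H)$; the interiors of the $\Delta_k$ are pairwise disjoint; and the cubes $\Delta_k^\ast$ with the same centers enlarged $5/4$ times satisfy $\sum_k\chi_{\Delta_k^\ast}\le C_n$. For $k\ge1$ and $z=(x,t)\in\mathbb H$, $$S^k_{a,b}f(z)=t^a\int_{\Delta_k}\frac{s^b f(w)\,dw}{|z-\overline w|^{n+1+a+b}}.$$ For $w=(y,s)\in\mathbb H$, $Q_w$ denotes the cube with sides parallel to the axes, centered at $w$, with side length $s$. For $1<p<\infty$ and $1/p+1/q=1$, a positive locally integrable function $V$ on $\mathbb H$ belongs to $MH(p)$ if $$\sup_{w\in\mathbb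 H}\left(\frac{1}{|Q_w|}\int_{Q_w}V(z)\,dz\right)\left(\frac{1}{|Q_w|}\int_{Q_w}V(z)^{-q/p}\,dz\right)^{p/q}<\infty.$$ *)

theory Defs
  imports "HOL-Analysis.Analysis"
begin

type_synonym 'n pt = "(real^'n) \<times> real"

definition Hup :: "'n::finite pt set" where
  "Hup = {z. snd z > 0}"

definition reflect :: "'n::finite pt \<Rightarrow> 'n pt" where
  "reflect z = (fst z, - snd z)"

definition cube :: "'n::finite pt \<Rightarrow> real \<Rightarrow> 'n pt set" where
  "cube c r = cbox (c - r *\<^sub>R One) (c + r *\<^sub>R One)"

definition Qcube :: "'n::finite pt \<Rightarrow> 'n pt set" where
  "Qcube w = cube w (snd w / 2)"

definition whitney_family :: "(nat \<Rightarrow> 'n::finite pt set) \<Rightarrow> bool" where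
  "whitney_family \<Delta> \<longleftrightarrow>
     (\<exists>c r. (\<forall>k. r k > 0 \<and> \<Delta> k = cube (c k) (r k))
        \<and> (\<exists>N::nat. \<forall>z. finite {k. z \<in> cube (c k) (5/4 * r k)}
                         \<and> card {k. z \<in> cube (c k) (5/4 * r k)} \<le> N))
     \<and> (\<Union>k. \<Delta> k) = Hup
     \<and> (\<forall>j k. j \<noteq> k \<longrightarrow> interior (\<Delta> j) \<inter> interior (\<Delta> k) = {})
     \<and> (\<exists>A B. 0 < A \<and> 0 < B \<and>
          (\<forall>k. A * diameter (\<Delta> k) \<le> setdist (\<Delta> k) {z. snd z = 0}
             \<and> setdist (\<Delta> k) {z. snd z = 0} \<le> B * diameter (\<Delta> k)))"

definition S_op :: "real \<Rightarrow> real \<Rightarrow> (nat \<Rightarrow> 'n::finite pt set) \<Rightarrow> nat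
                    \<Rightarrow> ('n pt \<Rightarrow> real) \<Rightarrow> 'n pt \<Rightarrow> real" where
  "S_op a b \<Delta> k f z = snd z powr a *
     (LINT w:\<Delta> k|lborel. snd w powr b * f w
         / norm (z - reflect w) powr (real CARD('n) + 1 + a + b))"

definition MH :: "real \<Rightarrow> ('n::finite pt \<Rightarrow> real) \<Rightarrow> bool" where
  "MH p V \<longleftrightarrow> (let q = p / (p - 1) in
     (\<forall>z\<in>Hup. V z > 0)
     \<and> (\<forall>K. compact K \<and> K \<subseteq> Hup \<longrightarrow> set_integrable lborel K V)
     \<and> (\<forall>w\<in>Hup. set_integrable lborel (Qcube w) (\<lambda>z. V z powr (- q / p)))
     \<and> (\<exists>M. \<forall>w\<in>Hup.
          ((LINT z:Qcube w|lborel. V z) / measure lborel (Qcube w)) *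
          ((LINT z:Qcube w|lborel. V z powr (- q / p)) / measure lborel (Qcube w)) powr (p / q)
          \<le> M))"

definition Lp_loc :: "real \<Rightarrow> ('n::finite pt \<Rightarrow> real) \<Rightarrow> bool" where
  "Lp_loc p f \<longleftrightarrow> (\<forall>K. compact K \<and> K \<subseteq> Hup \<longrightarrow>
      set_integrable lborel K (\<lambda>z. \<bar>f z\<bar> powr p))"

end

theory Submission
  imports Defs
begin

text \<open>
  On a Whitney cube \<Delta> of half side r the kernel t^a s^b / |z - reflect w|^(n+1+a+b) is bounded
  by K r^-(n+1), hence |S^k f| \<le> K r^-(n+1) \<integral>_\<Delta> |f|. H\<ouml>lder's inequality with the weight V gives
  (\<integral>_\<Delta> |f|)^p \<le> (\<integral>_\<Delta> |f|^p V) (\<integral>_\<Delta> V^(-q/p))^(p-1), and the MH(p) condition, transported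
  from the cubes Q_w to Whitney cubes by a doubling argument and a covering by boundedly many
  cubes Q_w, yields (\<integral>_\<Delta> V) (\<integral>_\<Delta> V^(-q/p))^(p-1) \<le> A r^((n+1)p). Hence
  \<integral>_\<Delta> |S^k f|^p V \<le> K^p A \<integral>_\<Delta> |f|^p V with constants independent of k, and the
  \<sigma>/p-th powers can be summed.
\<close>

lemma Youngs_inequality_weighted:
  fixes g v \<alpha> \<beta> p q :: real
  assumes p: "1 < p" and q: "1 < q" "1/p + 1/q = 1" and v: "0 < v" and g: "0 \<le> g"
    and \<alpha>: "0 < \<alpha>" and \<beta>: "0 < \<beta>"
  shows "\<alpha> * \<beta> * g \<le> \<alpha> powr p * (g powr p * v) / p + \<beta> powr q * v powr (-q/p) / q"
proof -
  have "v powr (1/p) * v powr (-1/p) = 1" using v by (simp flip: powr_add)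
  then have split: "\<alpha> * \<beta> * g = (\<alpha> * g * v powr (1/p)) * (\<beta> * v powr (-1/p))"
    by (simp add: algebra_simps)
  have "\<alpha> * \<beta> * g \<le> (\<alpha> * g * v powr (1/p)) powr p / p + (\<beta> * v powr (-1/p)) powr q / q"
    unfolding split using \<alpha> \<beta> g by (intro Youngs_inequality[OF p q]) auto
  also have "(\<alpha> * g * v powr (1/p)) powr p = \<alpha> powr p * (g powr p * v)"
    using \<alpha> g v p by (simp add: powr_mult powr_powr)
  also have "(\<beta> * v powr (-1/p)) powr q = \<beta> powr q * v powr (-q/p)"
    using \<beta> v by (simp add: powr_mult powr_powr)
  finally show ?thesis .
qed

lemma powr_le_if_Young_family:
  fixes I X Y p q :: real
  assumes p: "1 < p" and q: "1 < q" "1/p + 1/q = 1"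
    and I: "0 \<le> I" and X: "0 \<le> X" and Y: "0 \<le> Y"
    and Young: "\<And>\<alpha> \<beta>. 0 < \<alpha> \<Longrightarrow> 0 < \<beta> \<Longrightarrow> \<alpha> * \<beta> * I \<le> \<alpha> powr p * X / p + \<beta> powr q * Y / q"
  shows "I powr p \<le> X * Y powr (p/q)"
proof (cases "0 < X \<and> 0 < Y")
  case True
  define \<alpha> where "\<alpha> = X powr (-1/p)"
  define \<beta> where "\<beta> = Y powr (-1/q)"
  have \<alpha>: "0 < \<alpha>" and \<beta>: "0 < \<beta>" using True by (auto simp: \<alpha>_def \<beta>_def)
  have "\<alpha> powr p * X = 1" using True p by (simp add: \<alpha>_def powr_powr flip: powr_add)
  moreover have "\<beta> powr q * Y = 1" using True q by (simp add: \<beta>_def powr_powr flip: powr_add)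
  ultimately have "\<alpha> * \<beta> * I \<le> 1/p + 1/q" using Young[OF \<alpha> \<beta>] by (simp add: mult.assoc)
  then have "I \<le> 1 / (\<alpha> * \<beta>)" using \<alpha> \<beta> q by (simp add: field_simps)
  also have "1 / (\<alpha> * \<beta>) = X powr (1/p) * Y powr (1/q)" using True
    by (simp add: \<alpha>_def \<beta>_def powr_minus_divide divide_simps flip: powr_minus)
  finally have "I powr p \<le> (X powr (1/p) * Y powr (1/q)) powr p"
    using I p by (intro powr_mono2) auto
  also have "\<dots> = X * Y powr (p/q)" using True p by (simp add: powr_mult powr_powr)
  finally show ?thesis .
next
  case False
  \<comment> \<open>If X = 0 (resp. Y = 0), letting \<alpha> (resp. \<beta>) grow in the Young family forces I = 0.\<close>
  have "I \<le> 0"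
  proof (rule ccontr)
    assume "\<not> I \<le> 0"
    then have I_pos: "0 < I" by simp
    show False
    proof (cases "X = 0")
      case True
      define t where "t = (Y/q + 1) / I"
      have t: "0 < t" using I_pos Y q by (simp add: t_def add_nonneg_pos)
      have "t * 1 * I \<le> t powr p * X / p + 1 powr q * Y / q" by (rule Young[OF t]) simp
      also have "t * 1 * I = Y/q + 1" using I_pos by (simp add: t_def)
      finally show False using True by simp
    next
      case X_pos: False
      then have Y0: "Y = 0" using False X Y by auto
      define t where "t = (X/p + 1) / I"
      have t: "0 < t" using I_pos X p by (simp add: t_def add_nonneg_pos)
      have "1 * t * I \<le> 1 powr p * X / p + t powr q * Y / q" by (rule Young[OF _ t]) simp
      also have "1 * t * I = X/p + 1" using I_pos by (simp add: t_def)
      finally show False using Y0 by simp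
    qed
  qed
  then show ?thesis using I X Y by simp
qed

lemma set_integral_nonneg:
  fixes f :: "'a \<Rightarrow> real"
  assumes "\<And>x. x \<in> A \<Longrightarrow> 0 \<le> f x"
  shows "0 \<le> (LINT x:A|M. f x)"
  unfolding set_lebesgue_integral_def
  by (rule Bochner_Integration.integral_nonneg) (auto simp: assms indicator_def)

lemma set_integral_mono_set:
  fixes f :: "'a \<Rightarrow> real"
  assumes "set_integrable M B f" "A \<in> sets M" "A \<subseteq> B" "\<And>x. x \<in> B \<Longrightarrow> 0 \<le> f x"
  shows "(LINT x:A|M. f x) \<le> (LINT x:B|M. f x)"
proof -
  have "set_integrable M A f" using assms(1-3) by (rule set_integrable_subset)
  then show ?thesis
    using assms(1) unfolding set_integrable_def set_lebesgue_integral_def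
    by (intro integral_mono) (use assms(3,4) in \<open>auto simp: indicator_def\<close>)
qed

lemma weighted_Holder_inequality:
  fixes g V :: "'a \<Rightarrow> real" and p :: real
  assumes p: "1 < p" and P: "P \<in> sets M"
    and V: "\<And>x. x \<in> P \<Longrightarrow> 0 < V x" and g: "\<And>x. x \<in> P \<Longrightarrow> 0 \<le> g x"
    and g_meas: "set_borel_measurable M P g"
    and int_gV: "set_integrable M P (\<lambda>x. g x powr p * V x)"
    and int_dual: "set_integrable M P (\<lambda>x. V x powr (-(p/(p-1))/p))"
  shows "set_integrable M P g"
    and "(LINT x:P|M. g x) powr p
           \<le> (LINT x:P|M. g x powr p * V x) * (LINT x:P|M. V x powr (-(p/(p-1))/p)) powr (p-1)"
proof -
  define q where "q = p/(p-1)"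
  have q: "1 < q" "1/p + 1/q = 1" "p/q = p - 1" using p by (auto simp: q_def field_simps)
  have Young: "\<alpha> * \<beta> * g x \<le> \<alpha> powr p / p * (g x powr p * V x) + \<beta> powr q / q * V x powr (-q/p)"
    if "x \<in> P" "0 < \<alpha>" "0 < \<beta>" for x \<alpha> \<beta>
    using Youngs_inequality_weighted[OF p q(1,2) V g, of x x \<alpha> \<beta>] that by simp
  have int_dual': "set_integrable M P (\<lambda>x. V x powr (-q/p))" using int_dual by (simp add: q_def)
  have int_sum: "set_integrable M P
      (\<lambda>x. \<alpha> powr p / p * (g x powr p * V x) + \<beta> powr q / q * V x powr (-q/p))" for \<alpha> \<beta>
    using int_gV int_dual' by (intro set_integral_add(1) set_integrable_mult_right)
  show int_g: "set_integrable M P g"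
  proof (rule set_integrable_bound[OF int_sum[of 1 1] g_meas], intro AE_I2 impI)
    fix x assume x: "x \<in> P"
    have "0 \<le> 1 powr p / p * (g x powr p * V x) + 1 powr q / q * V x powr (-q/p)"
      using V[OF x] p q by (intro add_nonneg_nonneg) auto
    then show "norm (g x) \<le> norm (1 powr p / p * (g x powr p * V x) + 1 powr q / q * V x powr (-q/p))"
      using Young[OF x, of 1 1] g[OF x] by simp
  qed
  have "(LINT x:P|M. g x) powr p
          \<le> (LINT x:P|M. g x powr p * V x) * (LINT x:P|M. V x powr (-q/p)) powr (p/q)"
  proof (rule powr_le_if_Young_family[OF p q(1,2)])
    fix \<alpha> \<beta> :: real assume \<alpha>: "0 < \<alpha>" and \<beta>: "0 < \<beta>"
    have "\<alpha> * \<beta> * (LINT x:P|M. g x) = (LINT x:P|M. \<alpha> * \<beta> * g x)" by simp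
    also have "\<dots> \<le> (LINT x:P|M. \<alpha> powr p / p * (g x powr p * V x) + \<beta> powr q / q * V x powr (-q/p))"
      using int_g int_sum Young \<alpha> \<beta> by (intro set_integral_mono) auto
    also have "\<dots> = \<alpha> powr p * (LINT x:P|M. g x powr p * V x) / p + \<beta> powr q * (LINT x:P|M. V x powr (-q/p)) / q"
      using int_gV int_dual' by (simp add: set_integral_add(2))
    finally show "\<alpha> * \<beta> * (LINT x:P|M. g x) \<le> \<dots>" .
  qed (use g V[THEN less_imp_le] in \<open>auto intro!: set_integral_nonneg\<close>)
  then show "(LINT x:P|M. g x) powr p
      \<le> (LINT x:P|M. g x powr p * V x) * (LINT x:P|M. V x powr (-(p/(p-1))/p)) powr (p-1)"
    using q(3) by (simp add: q_def)
qed

lemma set_integral_powr_weight_le: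
  fixes g V :: "'a \<Rightarrow> real"
  assumes g: "set_borel_measurable M D g" and V: "set_integrable M D V"
    and V_nonneg: "\<And>z. z \<in> D \<Longrightarrow> 0 \<le> V z" and bound: "\<And>z. z \<in> D \<Longrightarrow> \<bar>g z\<bar> \<le> c"
    and p: "0 \<le> p"
  shows "set_integrable M D (\<lambda>z. \<bar>g z\<bar> powr p * V z)"
    and "(LINT z:D|M. \<bar>g z\<bar> powr p * V z) \<le> c powr p * (LINT z:D|M. V z)"
proof -
  have le: "\<bar>g z\<bar> powr p * V z \<le> c powr p * V z" if "z \<in> D" for z
    using bound[OF that] V_nonneg[OF that] p by (intro mult_right_mono powr_mono2) auto
  have "(\<lambda>z. indicator D z *\<^sub>R V z) \<in> borel_measurable M"
    using V unfolding set_integrable_def by (rule borel_measurable_integrable)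
  then have "(\<lambda>z. \<bar>indicator D z *\<^sub>R g z\<bar> powr p * (indicator D z *\<^sub>R V z)) \<in> borel_measurable M"
    using g unfolding set_borel_measurable_def by measurable
  also have "(\<lambda>z. \<bar>indicator D z *\<^sub>R g z\<bar> powr p * (indicator D z *\<^sub>R V z))
      = (\<lambda>z. indicator D z *\<^sub>R (\<bar>g z\<bar> powr p * V z))"
    by (auto simp: fun_eq_iff indicator_def)
  finally have meas: "set_borel_measurable M D (\<lambda>z. \<bar>g z\<bar> powr p * V z)"
    unfolding set_borel_measurable_def .
  have bound_int: "set_integrable M D (\<lambda>z. c powr p * V z)" using V by simp
  show int: "set_integrable M D (\<lambda>z. \<bar>g z\<bar> powr p * V z)"
  proof (rule set_integrable_bound[OF bound_int meas], intro AE_I2 impI)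
    fix z assume z: "z \<in> D"
    show "norm (\<bar>g z\<bar> powr p * V z) \<le> norm (c powr p * V z)"
      using le[OF z] V_nonneg[OF z] unfolding real_norm_def by (simp add: abs_of_nonneg)
  qed
  have "(LINT z:D|M. \<bar>g z\<bar> powr p * V z) \<le> (LINT z:D|M. c powr p * V z)"
    using int bound_int le by (rule set_integral_mono)
  then show "(LINT z:D|M. \<bar>g z\<bar> powr p * V z) \<le> c powr p * (LINT z:D|M. V z)" by simp
qed

lemma set_integral_le_card_mult_of_cover:
  fixes f :: "'a::euclidean_space \<Rightarrow> real" and B :: "'i \<Rightarrow> 'a set"
  assumes I: "finite I" and A: "A \<in> sets lborel" and B: "\<And>i. i \<in> I \<Longrightarrow> B i \<in> sets lborel"
    and cover: "A \<subseteq> (\<Union>i\<in>I. B i)" and int: "\<And>i. i \<in> I \<Longrightarrow> set_integrable lborel (B i) f"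
    and nonneg: "\<And>x. x \<in> (\<Union>i\<in>I. B i) \<Longrightarrow> 0 \<le> f x"
    and bound: "\<And>i. i \<in> I \<Longrightarrow> (LINT x:B i|lborel. f x) \<le> L"
  shows "set_integrable lborel A f" and "(LINT x:A|lborel. f x) \<le> real (card I) * L"
proof -
  have int_U: "set_integrable lborel (\<Union>i\<in>I. B i) f" using I int B by (rule set_integrable_UN)
  show "set_integrable lborel A f" using int_U A cover by (rule set_integrable_subset)
  have "(LINT x:A|lborel. f x) \<le> (LINT x:(\<Union>i\<in>I. B i)|lborel. f x)"
    using int_U A cover nonneg by (rule set_integral_mono_set)
  also have "\<dots> \<le> integral\<^sup>L lborel (\<lambda>x. \<Sum>i\<in>I. indicator (B i) x *\<^sub>R f x)"
    unfolding set_lebesgue_integral_def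
  proof (rule integral_mono)
    show "integrable lborel (\<lambda>x. indicator (\<Union>i\<in>I. B i) x *\<^sub>R f x)"
      using int_U by (simp add: set_integrable_def)
    show "integrable lborel (\<lambda>x. \<Sum>i\<in>I. indicator (B i) x *\<^sub>R f x)"
      using int by (auto simp: set_integrable_def)
    fix x
    show "indicator (\<Union>i\<in>I. B i) x *\<^sub>R f x \<le> (\<Sum>i\<in>I. indicator (B i) x *\<^sub>R f x)"
    proof (cases "x \<in> (\<Union>i\<in>I. B i)")
      case True
      then obtain i where i: "i \<in> I" "x \<in> B i" by blast
      have "indicator (B i) x *\<^sub>R f x \<le> (\<Sum>i\<in>I. indicator (B i) x *\<^sub>R f x)"
        using I i(1) nonneg[OF True] by (intro member_le_sum) (auto simp: indicator_def)
      then show ?thesis using True i by (simp add: indicator_def)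
    qed (auto simp: indicator_def)
  qed
  also have "\<dots> = (\<Sum>i\<in>I. LINT x:B i|lborel. f x)"
    unfolding set_lebesgue_integral_def
    by (rule Bochner_Integration.integral_sum) (use int in \<open>auto simp: set_integrable_def\<close>)
  also have "\<dots> \<le> real (card I) * L" using bound by (rule sum_bounded_above)
  finally show "(LINT x:A|lborel. f x) \<le> real (card I) * L" .
qed

lemma le_scaled_by_product_bounds:
  fixes m u v u' v' K :: real
  assumes m: "0 < m" and lower: "m \<le> u * v" and u: "0 \<le> u" and v: "v \<le> v'"
    and u': "0 \<le> u'" and upper: "u' * v' \<le> K"
  shows "u' \<le> K / m * u"
proof -
  have "u' * m \<le> u' * (u * v)" using lower u' by (rule mult_left_mono)
  also have "\<dots> = u * (u' * v)" by simp
  also have "\<dots> \<le> u * (u' * v')" using v u u' by (intro mult_left_mono) auto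
  also have "\<dots> \<le> u * K" using upper u by (rule mult_left_mono)
  finally show ?thesis using m by (simp add: field_simps)
qed

lemma doubling_iterate:
  fixes F :: "real \<Rightarrow> real"
  assumes doubling: "\<And>s. 0 < s \<Longrightarrow> F s \<le> K * F (2 * s)" and K: "0 \<le> K" and s: "0 < s"
  shows "F s \<le> K^m * F (2^m * s)"
proof (induction m)
  case (Suc m)
  have "F (2^m * s) \<le> K * F (2^Suc m * s)"
    using doubling[of "2^m * s"] s by (simp add: mult.assoc)
  then have "K^m * F (2^m * s) \<le> K^m * (K * F (2^Suc m * s))"
    using K by (intro mult_left_mono) auto
  also have "\<dots> = K^Suc m * F (2^Suc m * s)" by (simp add: mult.assoc)
  finally have "K^m * F (2^m * s) \<le> K^Suc m * F (2^Suc m * s)" .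
  with Suc.IH show ?case by linarith
qed simp

lemma summable_powr_comparison:
  fixes X Y :: "nat \<Rightarrow> real" and C e :: real
  assumes e: "0 < e" and C: "0 \<le> C" and X: "\<And>k. 0 \<le> X k" and Y: "\<And>k. 0 \<le> Y k"
    and le: "\<And>k. Y k \<le> C * X k" and sum_X: "summable (\<lambda>k. X k powr e)"
  shows "summable (\<lambda>k. Y k powr e)" and "(\<Sum>k. Y k powr e) \<le> C powr e * (\<Sum>k. X k powr e)"
proof -
  have pointwise: "Y k powr e \<le> C powr e * X k powr e" for k
  proof -
    have "Y k powr e \<le> (C * X k) powr e" using le Y e by (intro powr_mono2) auto
    also have "\<dots> = C powr e * X k powr e" using C X by (simp add: powr_mult)
    finally show ?thesis .
  qed
  have sum_CX: "summable (\<lambda>k. C powr e * X k powr e)" using sum_X by (rule summable_mult)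
  show sum_Y: "summable (\<lambda>k. Y k powr e)"
    by (rule summable_comparison_test'[OF sum_CX]) (use pointwise in simp)
  have "(\<Sum>k. Y k powr e) \<le> (\<Sum>k. C powr e * X k powr e)"
    using pointwise sum_Y sum_CX by (rule suminf_le)
  also have "\<dots> = C powr e * (\<Sum>k. X k powr e)" using sum_X by (rule suminf_mult)
  finally show "(\<Sum>k. Y k powr e) \<le> C powr e * (\<Sum>k. X k powr e)" .
qed

section \<open>Cubes and Whitney families\<close>

lemma mem_cube_Basis: "z \<in> cube c r \<longleftrightarrow> (\<forall>i\<in>Basis. \<bar>z \<bullet> i - c \<bullet> i\<bar> \<le> r)"
  by (auto simp: cube_def mem_box inner_diff_left inner_add_left abs_le_iff)

lemma mem_cube:
  "z \<in> cube c r \<longleftrightarrow> (\<forall>i. \<bar>fst z $ i - fst c $ i\<bar> \<le> r) \<and> \<bar>snd z - snd c\<bar> \<le> r"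
proof -
  obtain x t y s where "z = (x, t)" "c = (y, s)" by fastforce
  then show ?thesis unfolding mem_cube_Basis
    by (auto simp: Basis_prod_def inner_Pair inner_diff_left cart_eq_inner_axis Basis_vec_def)
qed

lemma compact_cube: "compact (cube c r)"
  by (simp add: cube_def)

lemma cube_in_sets_lborel: "cube c r \<in> sets lborel"
  by (simp add: cube_def)

lemma measure_cube:
  assumes "0 \<le> r"
  shows "measure lborel (cube (c::'n::finite pt) r) = (2*r)^(CARD('n)+1)"
proof -
  have "measure lborel (cube c r) = (\<Prod>b\<in>(Basis::'n pt set). 2*r)"
    unfolding cube_def measure_lborel_cbox_eq using assms
    by (auto simp: inner_diff_left inner_add_left algebra_simps)
  then show ?thesis by simp
qed

lemma cube_subset_Hup: "r < snd c \<Longrightarrow> cube c r \<subseteq> Hup"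
  by (auto simp: mem_cube Hup_def abs_le_iff)

lemma Qcube_subset_Hup: "w \<in> Hup \<Longrightarrow> Qcube w \<subseteq> Hup"
  unfolding Qcube_def by (intro cube_subset_Hup) (auto simp: Hup_def)

lemma measure_Qcube: "w \<in> Hup \<Longrightarrow> measure lborel (Qcube (w::'n::finite pt)) = snd w ^ (CARD('n)+1)"
  unfolding Qcube_def by (subst measure_cube) (auto simp: Hup_def)

lemma measure_Qcube_powr:
  assumes "w \<in> Hup"
  shows "measure lborel (Qcube (w::'n::finite pt)) powr p = snd w powr ((real CARD('n) + 1) * p)"
proof -
  have w: "0 < snd w" using assms by (simp add: Hup_def)
  have "measure lborel (Qcube w) = snd w powr real (CARD('n) + 1)"
    using assms w by (simp only: measure_Qcube powr_realpow)
  then show ?thesis using w by (simp add: powr_powr add.commute)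
qed

lemma diameter_cube:
  fixes c :: "'n::finite pt"
  assumes "0 \<le> r"
  shows "diameter (cube c r) = 2 * r * norm (One::'n pt)"
proof -
  have "diameter (cube c r) = dist (c - r *\<^sub>R One) (c + r *\<^sub>R (One::'n pt))"
    unfolding cube_def using assms
    by (intro diameter_cbox) (auto simp: inner_diff_left inner_add_left)
  also have "\<dots> = norm ((2 * r) *\<^sub>R (One::'n pt))"
    by (simp add: dist_norm norm_minus_commute algebra_simps flip: scaleR_2)
  finally show ?thesis using assms by simp
qed

lemma one_le_norm_One: "1 \<le> norm (One::'n::finite pt)"
proof -
  obtain i :: "'n pt" where i: "i \<in> Basis" using nonempty_Basis by blast
  have "\<bar>One \<bullet> i\<bar> \<le> norm (One::'n pt)" using i by (rule Basis_le_norm)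
  then show ?thesis using i by simp
qed

lemma setdist_cube_boundary:
  assumes "0 \<le> r" "r < snd c"
  shows "setdist (cube c r) {z::'n::finite pt. snd z = 0} = snd c - r"
proof (rule antisym)
  have "setdist (cube c r) {z::'n pt. snd z = 0} \<le> dist (fst c, snd c - r) (fst c, 0)"
    using assms by (intro setdist_le_dist) (auto simp: mem_cube)
  then show "setdist (cube c r) {z::'n pt. snd z = 0} \<le> snd c - r"
    using assms by (simp add: dist_Pair_Pair)
  have "c \<in> cube c r" using assms by (simp add: mem_cube)
  moreover have "(fst c, 0) \<in> {z::'n pt. snd z = 0}" by simp
  moreover have "snd c - r \<le> dist x y" if "x \<in> cube c r" "snd y = 0" for x y :: "'n pt"
  proof -
    have "snd c - r \<le> snd x" using that by (auto simp: mem_cube abs_le_iff)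
    also have "\<dots> = dist (snd x) (snd y)" using that assms \<open>snd c - r \<le> snd x\<close>
      by (simp add: dist_real_def)
    also have "\<dots> \<le> dist x y" by (rule dist_snd_le)
    finally show ?thesis .
  qed
  ultimately show "snd c - r \<le> setdist (cube c r) {z::'n pt. snd z = 0}"
    by (subst le_setdist_iff) blast
qed

lemma whitney_family_subset_Hup: "whitney_family \<Delta> \<Longrightarrow> \<Delta> k \<subseteq> Hup"
  unfolding whitney_family_def by blast

text \<open>For a cube of centre c and half side r in the half-space, snd c - r is its distance to the boundary.\<close>

lemma whitney_family_cubes:
  fixes \<Delta> :: "nat \<Rightarrow> 'n::finite pt set"
  assumes "whitney_family \<Delta>"
  obtains r c \<beta> B where "\<And>k. 0 < r k" "\<And>k. \<Delta> k = cube (c k) (r k)" "0 < \<beta>" "0 < B"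
    "\<And>k. \<beta> * r k \<le> snd (c k) - r k" "\<And>k. snd (c k) - r k \<le> B * r k"
proof -
  obtain c r A B where cr: "\<forall>k. 0 < r k \<and> \<Delta> k = cube (c k) (r k)" and AB: "0 < A" "0 < B"
    and bounds': "\<forall>k. A * diameter (\<Delta> k) \<le> setdist (\<Delta> k) {z. snd z = 0}
                   \<and> setdist (\<Delta> k) {z. snd z = 0} \<le> B * diameter (\<Delta> k)"
    using assms unfolding whitney_family_def by (elim conjE exE) blast
  have r: "\<And>k. 0 < r k" and D: "\<And>k. \<Delta> k = cube (c k) (r k)" using cr by auto
  note bounds = bounds'[rule_format]
  define D0 where "D0 = norm (One::'n pt)"
  have D0: "1 \<le> D0" unfolding D0_def by (rule one_le_norm_One)
  have "(fst (c k), snd (c k) - r k) \<in> \<Delta> k" for k using r[of k] by (simp add: D mem_cube)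
  then have "r k < snd (c k)" for k
    using whitney_family_subset_Hup[OF assms] by (force simp: Hup_def)
  then have sd: "setdist (\<Delta> k) {z. snd z = 0} = snd (c k) - r k" for k
    unfolding D using r[of k] by (intro setdist_cube_boundary) auto
  have diam: "diameter (\<Delta> k) = 2 * r k * D0" for k
    unfolding D D0_def using r[of k] by (intro diameter_cube) auto
  show ?thesis
  proof (rule that[of r c "2*A*D0" "2*B*D0"])
    show "0 < 2*A*D0" "0 < 2*B*D0" using AB D0 by auto
    show "2*A*D0 * r k \<le> snd (c k) - r k" "snd (c k) - r k \<le> 2*B*D0 * r k" for k
      using bounds[of k] sd[of k] diam[of k] by (simp_all add: algebra_simps)
  qed (use r D in auto)
qed

section \<open>Covering a Whitney cube by cubes Q_w\<close>

lemma dyadic_scale_cover: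
  fixes a t :: real
  assumes a: "0 < a" and t: "a \<le> t" "t \<le> 3 * 2^J * a"
  shows "\<exists>j\<le>J. 2^j * a \<le> t \<and> t \<le> 3 * 2^j * a"
  using t
proof (induction J)
  case (Suc J)
  show ?case
  proof (cases "t \<le> 3 * 2^J * a")
    case True
    then obtain j where "j \<le> J" "2^j * a \<le> t \<and> t \<le> 3 * 2^j * a" using Suc by blast
    then show ?thesis by (intro exI[of _ j]) auto
  next
    case False
    moreover have "2 * 2^J * a \<le> 3 * 2^J * a" using a by simp
    ultimately have "2 * 2^J * a \<le> t" by linarith
    then have "2^Suc J * a \<le> t" by simp
    then show ?thesis using Suc.prems by (intro exI[of _ "Suc J"]) auto
  qed
qed auto

lemma lattice_point_near:
  fixes d r s :: real and G :: nat
  assumes s: "0 < s" and d: "\<bar>d\<bar> \<le> r" and G: "2*r + s \<le> real G * s"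
  shows "\<exists>m\<le>G. \<bar>d - (real m * s - r)\<bar> \<le> s/2"
proof -
  define x where "x = (d + r)/s + 1/2"
  define m where "m = nat \<lfloor>x\<rfloor>"
  have m: "real m = of_int \<lfloor>x\<rfloor>" using d s by (simp add: m_def x_def)
  have "x \<le> 2*r/s + 1/2" using d s by (simp add: x_def divide_right_mono)
  also have "2*r/s \<le> real G - 1" using G s by (simp add: field_simps)
  finally have "m \<le> G" using m by linarith
  moreover have "d - (real m * s - r) = s * (x - 1/2 - real m)" using s by (simp add: x_def field_simps)
  moreover have "\<bar>x - 1/2 - real m\<bar> \<le> 1/2" using m by linarith
  ultimately show ?thesis using s by (intro exI[of _ m]) (simp add: abs_mult)
qed

definition grid :: "real^'n \<Rightarrow> real \<Rightarrow> real \<Rightarrow> nat \<Rightarrow> (real^'n) set" where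
  "grid x0 r s G = {y. \<forall>i. \<exists>m\<le>G. y $ i = x0 $ i + real m * s - r}"

lemma finite_card_grid:
  "finite (grid (x0::real^'n::finite) r s G) \<and> card (grid x0 r s G) \<le> (G+1)^CARD('n)"
proof -
  define F where "F = (\<lambda>m::'n\<Rightarrow>nat. \<chi> i. x0 $ i + real (m i) * s - r)"
  have sub: "grid x0 r s G \<subseteq> F ` (PiE UNIV (\<lambda>_. {..G}))"
  proof
    fix y assume "y \<in> grid x0 r s G"
    then have "\<forall>i. \<exists>m. m \<le> G \<and> y $ i = x0 $ i + real m * s - r" by (simp add: grid_def)
    then have "\<exists>m. \<forall>i. m i \<le> G \<and> y $ i = x0 $ i + real (m i) * s - r" by (rule choice)
    then obtain m where m: "\<forall>i. m i \<le> G \<and> y $ i = x0 $ i + real (m i) * s - r" by blast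
    have "m \<in> PiE UNIV (\<lambda>_. {..G})" using m by auto
    moreover have "y = F m" using m by (simp add: F_def vec_eq_iff)
    ultimately show "y \<in> F ` (PiE UNIV (\<lambda>_. {..G}))" by blast
  qed
  have fin: "finite (PiE (UNIV::'n set) (\<lambda>_. {..G}))" by (intro finite_PiE) auto
  have "card (grid x0 r s G) \<le> card (F ` (PiE UNIV (\<lambda>_. {..G})))"
    using sub fin by (intro card_mono) auto
  also have "\<dots> \<le> card (PiE (UNIV::'n set) (\<lambda>_. {..G}))" using fin by (rule card_image_le)
  also have "\<dots> = (G+1)^CARD('n)" by (simp add: card_PiE)
  finally show ?thesis using sub fin finite_subset by blast
qed

lemma cube_subset_grid_Qcubes:
  fixes x0 :: "real^'n::finite"
  assumes r: "0 < r" and \<beta>: "0 < \<beta>" and B: "0 < B"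
    and lo: "\<beta> * r \<le> h - r" and hi: "h - r \<le> B * r"
    and s: "s = 2*\<beta>*r" and J: "B + 3 \<le> 2^J * \<beta>" and G: "2*r + s \<le> real G * s"
    and z: "z \<in> cube (x0, h) r"
  shows "\<exists>y\<in>grid x0 r s G. \<exists>j\<le>J. z \<in> Qcube (y, 2^j * s)"
proof -
  have zx: "\<And>i. \<bar>fst z $ i - x0 $ i\<bar> \<le> r" and zt: "\<bar>snd z - h\<bar> \<le> r"
    using z by (auto simp: mem_cube)
  have s_pos: "0 < s" using s r \<beta> by simp
  have "snd z \<le> (B + 2) * r" using zt hi by (simp add: abs_le_iff algebra_simps)
  also have "\<dots> \<le> 3 * (2^J * \<beta>) * r" using J r B by (intro mult_right_mono) auto
  finally obtain j where j: "j \<le> J" "2^j * (s/2) \<le> snd z" "snd z \<le> 3 * 2^j * (s/2)"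
    using dyadic_scale_cover[of "s/2" "snd z" J] s_pos zt lo s by (auto simp: abs_le_iff)
  have "\<forall>i. \<exists>m. m \<le> G \<and> \<bar>fst z $ i - x0 $ i - (real m * s - r)\<bar> \<le> s/2"
    using lattice_point_near[OF s_pos zx G] by blast
  then have "\<exists>m. \<forall>i. m i \<le> G \<and> \<bar>fst z $ i - x0 $ i - (real (m i) * s - r)\<bar> \<le> s/2"
    by (rule choice)
  then obtain m where m: "\<And>i. m i \<le> G \<and> \<bar>fst z $ i - x0 $ i - (real (m i) * s - r)\<bar> \<le> s/2"
    by blast
  define y where "y = (\<chi> i. x0 $ i + real (m i) * s - r)"
  have "y \<in> grid x0 r s G" using m by (auto simp: grid_def y_def)
  moreover have "\<bar>fst z $ i - y $ i\<bar> \<le> 2^j * s / 2" for i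
  proof -
    have "s/2 \<le> 2^j * s / 2" using s_pos by simp
    then show ?thesis using m[of i] by (simp add: y_def algebra_simps)
  qed
  moreover have "\<bar>snd z - 2^j * s\<bar> \<le> 2^j * s / 2" using j(2,3) by arith
  ultimately show ?thesis using j(1) by (auto simp: Qcube_def mem_cube)
qed

lemma grid_close_to_centre:
  fixes x0 :: "real^'n::finite"
  assumes r: "0 < r" and \<beta>: "0 < \<beta>" and B: "0 < B"
    and s: "s = 2*\<beta>*r" and J: "B + 3 + 4*\<beta> \<le> 2^J * \<beta>" and G: "real G * s \<le> 2*r + 2 * s"
    and y: "y \<in> grid x0 r s G"
  shows "\<bar>y $ i - x0 $ i\<bar> \<le> 3 * (2^J * s) / 4"
proof -
  obtain m where m: "m \<le> G" "y $ i = x0 $ i + real m * s - r" using y by (auto simp: grid_def)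
  have s_pos: "0 < s" using s r \<beta> by simp
  have "real m * s \<le> real G * s" using m(1) s_pos by (intro mult_right_mono) auto
  moreover have "0 \<le> real m * s" using s_pos by simp
  ultimately have "\<bar>y $ i - x0 $ i\<bar> \<le> r + 2 * s"
    unfolding abs_le_iff using m(2) G r s_pos by linarith
  also have "\<dots> = (1 + 4*\<beta>) * r" using s by (simp add: algebra_simps)
  also have "\<dots> \<le> (3/2) * (2^J * \<beta>) * r" using J r \<beta> B by (intro mult_right_mono) auto
  also have "\<dots> = 3 * (2^J * s) / 4" using s by (simp add: algebra_simps)
  finally show ?thesis .
qed

lemma whitney_cube_Qcube_cover:
  fixes \<beta> B :: real
  assumes \<beta>: "0 < \<beta>" and B: "0 < B"
  shows "\<exists>m J :: nat. 0 < m \<and>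
    (\<forall>(x0::real^'n::finite) h r. 0 < r \<longrightarrow> \<beta> * r \<le> h - r \<longrightarrow> h - r \<le> B * r \<longrightarrow>
       (\<exists>W. finite W \<and> card W \<le> m \<and>
         cube (x0, h) r \<subseteq> (\<Union>(y, j)\<in>W. Qcube (y, 2^j * (2*\<beta>*r))) \<and>
         (\<forall>(y, j)\<in>W. j \<le> J \<and> (\<forall>i. \<bar>y $ i - x0 $ i\<bar> \<le> 3 * (2^J * (2*\<beta>*r)) / 4))))"
proof -
  obtain J :: nat where "(B + 3 + 4*\<beta>)/\<beta> < 2^J" using real_arch_pow[of 2] by auto
  then have J: "B + 3 + 4*\<beta> \<le> 2^J * \<beta>" using \<beta> by (simp add: field_simps)
  define G where "G = nat \<lceil>1/\<beta>\<rceil> + 1"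
  have G: "real G = of_int \<lceil>1/\<beta>\<rceil> + 1" "1/\<beta> \<le> of_int \<lceil>1/\<beta>\<rceil>" "of_int \<lceil>1/\<beta>\<rceil> < 1/\<beta> + 1"
    using \<beta> by (simp_all add: G_def) linarith+
  show ?thesis
  proof (rule exI[of _ "(G+1)^CARD('n) * (J+1)"], rule exI[of _ J], intro conjI allI impI)
    fix x0 :: "real^'n" and h r :: real
    assume r: "0 < r" and lo: "\<beta> * r \<le> h - r" and hi: "h - r \<le> B * r"
    define s where "s = 2*\<beta>*r"
    have s_pos: "0 < s" using \<beta> r by (simp add: s_def)
    have "2*r + s = (1/\<beta> + 1) * s" using \<beta> by (simp add: s_def field_simps)
    also have "\<dots> \<le> real G * s" using G s_pos by (intro mult_right_mono) auto
    finally have G1: "2*r + s \<le> real G * s" .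
    have "real G * s \<le> (1/\<beta> + 2) * s" using G s_pos by (intro mult_right_mono) auto
    also have "\<dots> = 2*r + 2 * s" using \<beta> by (simp add: s_def field_simps)
    finally have G2: "real G * s \<le> 2*r + 2 * s" .
    define W where "W = grid x0 r s G \<times> {..J}"
    have "finite W" using finite_card_grid[of x0 r s G] by (simp add: W_def)
    have "card W = card (grid x0 r s G) * (J+1)" by (simp add: W_def card_cartesian_product)
    also have "\<dots> \<le> (G+1)^CARD('n) * (J+1)"
      using finite_card_grid[of x0 r s G] by (intro mult_right_mono) auto
    finally have "card W \<le> (G+1)^CARD('n) * (J+1)" .
    moreover have "cube (x0, h) r \<subseteq> (\<Union>(y, j)\<in>W. Qcube (y, 2^j * s))"
    proof
      fix z assume "z \<in> cube (x0, h) r"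
      moreover have "B + 3 \<le> 2^J * \<beta>" using J \<beta> by linarith
      ultimately obtain y j where "y \<in> grid x0 r s G" "j \<le> J" "z \<in> Qcube (y, 2^j * s)"
        using cube_subset_grid_Qcubes[OF r \<beta> B lo hi s_def _ G1] by blast
      then show "z \<in> (\<Union>(y, j)\<in>W. Qcube (y, 2^j * s))" by (auto simp: W_def)
    qed
    moreover have "\<forall>(y, j)\<in>W. j \<le> J \<and> (\<forall>i. \<bar>y $ i - x0 $ i\<bar> \<le> 3 * (2^J * s) / 4)"
      using grid_close_to_centre[OF r \<beta> B s_def J G2] by (auto simp: W_def)
    ultimately show "\<exists>W. finite W \<and> card W \<le> (G+1)^CARD('n) * (J+1) \<and>
         cube (x0, h) r \<subseteq> (\<Union>(y, j)\<in>W. Qcube (y, 2^j * (2*\<beta>*r))) \<and>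
         (\<forall>(y, j)\<in>W. j \<le> J \<and> (\<forall>i. \<bar>y $ i - x0 $ i\<bar> \<le> 3 * (2^J * (2*\<beta>*r)) / 4))"
      unfolding s_def[symmetric] using \<open>finite W\<close> by blast
  qed simp
qed

section \<open>Weights of class MH(p)\<close>

text \<open>The class MH(p) with its bound M made explicit; the exponent p/q of the definition is p - 1.\<close>

locale MH_weight =
  fixes p :: real and V :: "'n::finite pt \<Rightarrow> real" and M :: real
  assumes p: "1 < p"
    and V_pos: "\<And>z. z \<in> Hup \<Longrightarrow> 0 < V z"
    and V_integrable: "\<And>K. compact K \<Longrightarrow> K \<subseteq> Hup \<Longrightarrow> set_integrable lborel K V"
    and dual_integrable: "\<And>w. w \<in> Hup \<Longrightarrow> set_integrable lborel (Qcube w) (\<lambda>z. V z powr (-(p/(p-1))/p))"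
    and MH_bound: "\<And>w. w \<in> Hup \<Longrightarrow>
          ((LINT z:Qcube w|lborel. V z) / measure lborel (Qcube w)) *
          ((LINT z:Qcube w|lborel. V z powr (-(p/(p-1))/p)) / measure lborel (Qcube w)) powr (p - 1)
          \<le> M"
begin

abbreviation Vdual :: "'n pt \<Rightarrow> real" where "Vdual z \<equiv> V z powr (-(p/(p-1))/p)"
abbreviation Vmass :: "'n pt set \<Rightarrow> real" where "Vmass A \<equiv> LINT z:A|lborel. V z"
abbreviation Vdual_mass :: "'n pt set \<Rightarrow> real" where "Vdual_mass A \<equiv> LINT z:A|lborel. Vdual z"

lemma V_nonneg: "z \<in> Hup \<Longrightarrow> 0 \<le> V z"
  using V_pos less_imp_le by blast

lemma Vmass_nonneg: "A \<subseteq> Hup \<Longrightarrow> 0 \<le> Vmass A"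
  by (rule set_integral_nonneg) (use V_nonneg in blast)

lemma Vdual_mass_nonneg: "0 \<le> Vdual_mass A"
  by (rule set_integral_nonneg) simp

lemma M_nonneg: "0 \<le> M"
proof -
  define w :: "'n pt" where "w = (0, 1)"
  have w: "w \<in> Hup" by (simp add: w_def Hup_def)
  have "0 \<le> (Vmass (Qcube w) / measure lborel (Qcube w)) *
      (Vdual_mass (Qcube w) / measure lborel (Qcube w)) powr (p - 1)"
    using Vmass_nonneg[OF Qcube_subset_Hup[OF w]] by simp
  then show ?thesis using MH_bound[OF w] by linarith
qed

lemma Qcube_Ap:
  assumes w: "w \<in> Hup"
  shows "Vmass (Qcube w) * Vdual_mass (Qcube w) powr (p-1) \<le> M * measure lborel (Qcube w) powr p"
proof -
  define m where "m = measure lborel (Qcube w)"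
  have m: "0 < m" using w by (simp add: m_def measure_Qcube Hup_def)
  have "(Vmass (Qcube w) / m) * (Vdual_mass (Qcube w) powr (p-1) / m powr (p-1)) \<le> M"
    using MH_bound[OF w] m Vdual_mass_nonneg by (simp add: m_def powr_divide)
  then have "Vmass (Qcube w) * Vdual_mass (Qcube w) powr (p-1) \<le> M * (m * m powr (p-1))"
    using m by (simp add: field_simps)
  also have "m * m powr (p-1) = m powr p"
    using m powr_add[of m 1 "p-1"] by simp
  finally show ?thesis by (simp add: m_def)
qed

lemma measure_powr_le_Ap:
  assumes P: "compact P" "P \<subseteq> Hup" and dual: "set_integrable lborel P Vdual"
  shows "measure lborel P powr p \<le> Vmass P * Vdual_mass P powr (p-1)"
proof -
  have "P \<in> sets lborel" using P by (simp add: compact_imp_closed)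
  then have "(LINT x:P|lborel. 1::real) powr p \<le> (LINT x:P|lborel. 1 powr p * V x) * Vdual_mass P powr (p-1)"
    using P V_integrable[OF P] V_pos dual
    by (intro weighted_Holder_inequality(2)[OF p]) (auto simp: set_borel_measurable_def)
  then show ?thesis by (simp add: set_lebesgue_integral_def)
qed

text \<open>The A_p-type bound implies doubling: H\<ouml>lder's inequality on a subset P of Q_w' together with
  the MH bound on Q_w' compares the masses of Q_w' with those of P.\<close>

lemma Qcube_comparable:
  assumes w: "w \<in> Hup" and w': "w' \<in> Hup" and P: "compact P" "P \<subseteq> Qcube w" "P \<subseteq> Qcube w'"
    and mP: "0 < measure lborel P"
  defines "\<rho> \<equiv> M * (measure lborel (Qcube w') / measure lborel P) powr p"
  shows "Vmass (Qcube w') \<le> \<rho> * Vmass (Qcube w)"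
    and "Vdual_mass (Qcube w') powr (p-1) \<le> \<rho> * Vdual_mass (Qcube w) powr (p-1)"
proof -
  have PH: "P \<subseteq> Hup" using P(2) Qcube_subset_Hup[OF w] by auto
  have PS: "P \<in> sets lborel" using P(1) by (simp add: compact_imp_closed)
  have dual_P: "set_integrable lborel P Vdual"
    using dual_integrable[OF w] PS P(2) by (rule set_integrable_subset)
  have Holder: "measure lborel P powr p \<le> Vmass P * Vdual_mass P powr (p-1)"
    by (rule measure_powr_le_Ap[OF P(1) PH dual_P])
  have Ap: "Vmass (Qcube w') * Vdual_mass (Qcube w') powr (p-1) \<le> M * measure lborel (Qcube w') powr p"
    by (rule Qcube_Ap[OF w'])
  have mPp: "0 < measure lborel P powr p" using mP by simp
  have \<rho>: "\<rho> = M * measure lborel (Qcube w') powr p / measure lborel P powr p"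
    using mP by (simp add: \<rho>_def powr_divide)
  have \<rho>_nonneg: "0 \<le> \<rho>" using M_nonneg by (simp add: \<rho>_def)
  have V_mono: "Vmass P \<le> Vmass (Qcube v)" if v: "v \<in> Hup" "P \<subseteq> Qcube v" for v
  proof (rule set_integral_mono_set[OF _ PS v(2)])
    show "set_integrable lborel (Qcube v) V"
      using v(1) by (intro V_integrable Qcube_subset_Hup) (simp_all add: Qcube_def compact_cube)
  qed (use Qcube_subset_Hup[OF v(1)] V_nonneg in blast)
  have dual_mono: "Vdual_mass P powr (p-1) \<le> Vdual_mass (Qcube v) powr (p-1)"
    if v: "v \<in> Hup" "P \<subseteq> Qcube v" for v
  proof -
    have "Vdual_mass P \<le> Vdual_mass (Qcube v)"
      by (rule set_integral_mono_set[OF dual_integrable[OF v(1)] PS v(2)]) simp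
    then show ?thesis using p Vdual_mass_nonneg by (intro powr_mono2) auto
  qed
  have "Vmass (Qcube w') \<le> \<rho> * Vmass P"
    unfolding \<rho> using Vmass_nonneg[OF PH] dual_mono[OF w' P(3)] Vmass_nonneg[OF Qcube_subset_Hup[OF w']]
    by (rule le_scaled_by_product_bounds[OF mPp Holder _ _ _ Ap])
  also have "\<dots> \<le> \<rho> * Vmass (Qcube w)" using V_mono[OF w P(2)] \<rho>_nonneg by (rule mult_left_mono)
  finally show "Vmass (Qcube w') \<le> \<rho> * Vmass (Qcube w)" .
  have Holder': "measure lborel P powr p \<le> Vdual_mass P powr (p-1) * Vmass P"
    by (subst mult.commute) (rule Holder)
  have Ap': "Vdual_mass (Qcube w') powr (p-1) * Vmass (Qcube w') \<le> M * measure lborel (Qcube w') powr p"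
    by (subst mult.commute) (rule Ap)
  have "Vdual_mass (Qcube w') powr (p-1) \<le> \<rho> * Vdual_mass P powr (p-1)"
    unfolding \<rho> using V_mono[OF w' P(3)]
    by (rule le_scaled_by_product_bounds[OF mPp Holder' powr_ge_zero _ powr_ge_zero Ap'])
  also have "\<dots> \<le> \<rho> * Vdual_mass (Qcube w) powr (p-1)"
    using dual_mono[OF w P(2)] \<rho>_nonneg by (rule mult_left_mono)
  finally show "Vdual_mass (Qcube w') powr (p-1) \<le> \<rho> * Vdual_mass (Qcube w) powr (p-1)" .
qed

definition doubling_const :: real where
  "doubling_const = max 1 (M * (2^(CARD('n)+1)) powr p)"

definition dual_doubling_const :: real where
  "dual_doubling_const = doubling_const powr (1/(p-1))"

lemma one_le_doubling_const: "1 \<le> doubling_const"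
  by (simp add: doubling_const_def)

lemma one_le_dual_doubling_const: "1 \<le> dual_doubling_const"
  using one_le_doubling_const p by (simp add: dual_doubling_const_def ge_one_powr_ge_zero)

lemma Qcube_doubling:
  fixes y y' :: "real^'n"
  assumes s: "0 < s" and near: "\<And>i. \<bar>y $ i - y' $ i\<bar> \<le> 3 * s / 4"
  shows "Vmass (Qcube (y, s)) \<le> doubling_const * Vmass (Qcube (y', 2 * s))"
    and "Vdual_mass (Qcube (y, s)) \<le> dual_doubling_const * Vdual_mass (Qcube (y', 2 * s))"
proof -
  \<comment> \<open>P is a common subcube of both cubes, of volume 2^-(n+1) |Q_(y,s)|.\<close>
  define P where "P = cube (y, 5 * s / 4) (s / 4)"
  have w: "(y', 2 * s) \<in> Hup" and w': "(y, s) \<in> Hup" using s by (auto simp: Hup_def)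
  have P_mem: "\<bar>fst z $ i - y $ i\<bar> \<le> s/4" "s \<le> snd z" "snd z \<le> 3 * s / 2" if "z \<in> P" for z i
  proof -
    have "\<bar>fst z $ i - y $ i\<bar> \<le> s/4" "\<bar>snd z - 5 * s / 4\<bar> \<le> s/4"
      using that by (simp_all add: P_def mem_cube)
    then show "\<bar>fst z $ i - y $ i\<bar> \<le> s/4" "s \<le> snd z" "snd z \<le> 3 * s / 2" by linarith+
  qed
  have P1: "P \<subseteq> Qcube (y', 2 * s)"
  proof
    fix z assume z: "z \<in> P"
    then have "\<bar>fst z $ i - y' $ i\<bar> \<le> 2 * s / 2" for i
      using P_mem(1)[of z i] near[of i] by linarith
    moreover have "\<bar>snd z - 2 * s\<bar> \<le> 2 * s / 2" using P_mem(2,3)[OF z] s by linarith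
    ultimately show "z \<in> Qcube (y', 2 * s)" by (simp add: Qcube_def mem_cube)
  qed
  have P2: "P \<subseteq> Qcube (y, s)"
  proof
    fix z assume z: "z \<in> P"
    then have "\<bar>fst z $ i - y $ i\<bar> \<le> s / 2" for i using P_mem(1)[of z i] s by linarith
    moreover have "\<bar>snd z - s\<bar> \<le> s / 2" using P_mem(2,3)[OF z] s by linarith
    ultimately show "z \<in> Qcube (y, s)" by (simp add: Qcube_def mem_cube)
  qed
  have mP: "measure lborel P = (s/2)^(CARD('n)+1)"
    unfolding P_def using s by (subst measure_cube) auto
  have P: "compact P" "0 < measure lborel P" using s by (simp_all only: mP) (simp_all add: P_def compact_cube)
  have ratio: "measure lborel (Qcube (y, s)) / measure lborel P = 2^(CARD('n)+1)"
    using s w' by (simp add: mP measure_Qcube power_divide)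
  have \<rho>: "M * (measure lborel (Qcube (y, s)) / measure lborel P) powr p \<le> doubling_const"
    unfolding ratio doubling_const_def by simp
  note cmp = Qcube_comparable[OF w w' P(1) P1 P2 P(2)]
  show "Vmass (Qcube (y, s)) \<le> doubling_const * Vmass (Qcube (y', 2 * s))"
    using cmp(1) mult_right_mono[OF \<rho> Vmass_nonneg[OF Qcube_subset_Hup[OF w]]] by linarith
  have "Vdual_mass (Qcube (y, s)) powr (p-1) \<le> doubling_const * Vdual_mass (Qcube (y', 2 * s)) powr (p-1)"
    using cmp(2) mult_right_mono[OF \<rho> powr_ge_zero[of "Vdual_mass (Qcube (y', 2 * s))" "p-1"]]
    by linarith
  then have "(Vdual_mass (Qcube (y, s)) powr (p-1)) powr (1/(p-1))
      \<le> (doubling_const * Vdual_mass (Qcube (y', 2 * s)) powr (p-1)) powr (1/(p-1))"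
    using p by (intro powr_mono2) auto
  then show "Vdual_mass (Qcube (y, s)) \<le> dual_doubling_const * Vdual_mass (Qcube (y', 2 * s))"
    using one_le_doubling_const p Vdual_mass_nonneg
    by (simp add: dual_doubling_const_def powr_mult powr_powr)
qed

lemma Qcube_dominated_by_enlarged:
  fixes y x0 :: "real^'n"
  assumes s: "0 < s" and j: "j \<le> J" and near: "\<And>i. \<bar>y $ i - x0 $ i\<bar> \<le> 3 * (2^J * s) / 4"
  shows "Vmass (Qcube (y, 2^j * s)) \<le> doubling_const^(J+1) * Vmass (Qcube (x0, 2^(J+1) * s))"
    and "Vdual_mass (Qcube (y, 2^j * s))
           \<le> dual_doubling_const^(J+1) * Vdual_mass (Qcube (x0, 2^(J+1) * s))"
proof -
  \<comment> \<open>J - j vertical doublings above y, then one step across to the cube above x0.\<close>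
  have chain: "F (2^j * s) \<le> K^(J+1) * G (2^(J+1) * s)"
    if double: "\<And>t. 0 < t \<Longrightarrow> F t \<le> K * F (2 * t)" and across: "F (2^J * s) \<le> K * G (2^(J+1) * s)"
      and K: "1 \<le> K" and G: "0 \<le> G (2^(J+1) * s)" for F G :: "real \<Rightarrow> real" and K
  proof -
    have "F (2^j * s) \<le> K^(J-j) * F (2^(J-j) * (2^j * s))"
      using K s by (intro doubling_iterate double) auto
    also have "2^(J-j) * (2^j * s) = 2^J * s"
      using j by (simp add: mult.assoc[symmetric] flip: power_add)
    also have "K^(J-j) * F (2^J * s) \<le> K^(J-j) * (K * G (2^(J+1) * s))"
      using across K by (intro mult_left_mono) auto
    also have "\<dots> \<le> K^(J+1) * G (2^(J+1) * s)"
    proof -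
      have "K^(J-j) * K \<le> K^(J+1)" using K j by (simp flip: power_Suc2 add: power_increasing)
      then show ?thesis using G by (simp add: mult.assoc[symmetric] mult_right_mono)
    qed
    finally show ?thesis .
  qed
  have s_J: "0 < 2^J * s" and sJ: "2 * (2^J * s) = 2^(J+1) * s" using s by simp_all
  have H: "(x0, 2^(J+1) * s) \<in> Hup" using s by (simp add: Hup_def)
  show "Vmass (Qcube (y, 2^j * s)) \<le> doubling_const^(J+1) * Vmass (Qcube (x0, 2^(J+1) * s))"
    using Qcube_doubling(1)[OF s_J near, unfolded sJ] Qcube_doubling(1)[of _ y y]
      one_le_doubling_const Vmass_nonneg[OF Qcube_subset_Hup[OF H]]
    by (intro chain[where F = "\<lambda>t. Vmass (Qcube (y, t))" and G = "\<lambda>t. Vmass (Qcube (x0, t))"]) auto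
  show "Vdual_mass (Qcube (y, 2^j * s))
      \<le> dual_doubling_const^(J+1) * Vdual_mass (Qcube (x0, 2^(J+1) * s))"
    using Qcube_doubling(2)[OF s_J near, unfolded sJ] Qcube_doubling(2)[of _ y y]
      one_le_dual_doubling_const Vdual_mass_nonneg
    by (intro chain[where F = "\<lambda>t. Vdual_mass (Qcube (y, t))" and G = "\<lambda>t. Vdual_mass (Qcube (x0, t))"]) auto
qed

end

context MH_weight
begin

lemma masses_le_of_Qcube_cover:
  fixes x0 :: "real^'n"
  assumes s: "0 < s" and A: "A \<in> sets lborel" and W: "finite W" "card W \<le> m"
    and cov: "A \<subseteq> (\<Union>(y, j)\<in>W. Qcube (y, 2^j * s))"
    and near: "\<forall>(y, j)\<in>W. j \<le> J \<and> (\<forall>i. \<bar>y $ i - x0 $ i\<bar> \<le> 3 * (2^J * s) / 4)"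
  defines "T \<equiv> Qcube (x0, 2^(J+1) * s)"
  shows "set_integrable lborel A Vdual"
    and "Vmass A \<le> (real m * doubling_const^(J+1)) * Vmass T"
    and "Vdual_mass A \<le> (real m * dual_doubling_const^(J+1)) * Vdual_mass T"
proof -
  have T: "(x0, 2^(J+1) * s) \<in> Hup" and Q: "(y, 2^j * s) \<in> Hup" for y j
    using s by (simp_all add: Hup_def)
  have dom: "Vmass (Qcube (y, 2^j * s)) \<le> doubling_const^(J+1) * Vmass T"
    "Vdual_mass (Qcube (y, 2^j * s)) \<le> dual_doubling_const^(J+1) * Vdual_mass T"
    if yj: "(y, j) \<in> W" for y j
  proof -
    have "j \<le> J" "\<And>i. \<bar>y $ i - x0 $ i\<bar> \<le> 3 * (2^J * s) / 4" using near yj by auto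
    from Qcube_dominated_by_enlarged[OF s this] show
      "Vmass (Qcube (y, 2^j * s)) \<le> doubling_const^(J+1) * Vmass T"
      "Vdual_mass (Qcube (y, 2^j * s)) \<le> dual_doubling_const^(J+1) * Vdual_mass T"
      unfolding T_def by simp_all
  qed
  have Q_sets: "(\<lambda>(y, j). Qcube (y, 2^j * s)) i \<in> sets lborel" for i
    by (cases i) (simp add: Qcube_def cube_def)
  have Q_Hup: "(\<lambda>(y, j). Qcube (y, 2^j * s)) i \<subseteq> Hup" for i
    using Qcube_subset_Hup[OF Q] by (auto split: prod.split)
  note cover_bound = set_integral_le_card_mult_of_cover[OF W(1) A Q_sets cov]
  have "Vmass A \<le> real (card W) * (doubling_const^(J+1) * Vmass T)"
  proof (rule cover_bound(2))
    show "set_integrable lborel ((\<lambda>(y, j). Qcube (y, 2^j * s)) i) V" for i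
      using Q_Hup[of i] by (intro V_integrable) (auto simp: Qcube_def compact_cube split: prod.split)
    show "0 \<le> V x" if "x \<in> (\<Union>i\<in>W. (\<lambda>(y, j). Qcube (y, 2^j * s)) i)" for x
      using that Q_Hup V_nonneg by blast
    show "(LINT x:(\<lambda>(y, j). Qcube (y, 2^j * s)) i|lborel. V x) \<le> doubling_const^(J+1) * Vmass T"
      if "i \<in> W" for i
      using dom(1) that by (cases i) simp
  qed
  also have "\<dots> \<le> real m * (doubling_const^(J+1) * Vmass T)"
    using W(2) Vmass_nonneg[OF Qcube_subset_Hup[OF T]] one_le_doubling_const
    by (intro mult_right_mono) (auto simp: T_def)
  finally show "Vmass A \<le> (real m * doubling_const^(J+1)) * Vmass T" by (simp only: mult.assoc)
  have dual_int: "set_integrable lborel ((\<lambda>(y, j). Qcube (y, 2^j * s)) i) Vdual" for i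
    using dual_integrable[OF Q] by (cases i) simp
  have dual_bound: "(LINT x:(\<lambda>(y, j). Qcube (y, 2^j * s)) i|lborel. Vdual x)
      \<le> dual_doubling_const^(J+1) * Vdual_mass T" if "i \<in> W" for i
    using dom(2) that by (cases i) simp
  show "set_integrable lborel A Vdual"
    by (rule cover_bound(1)[OF dual_int _ dual_bound]) simp_all
  have "Vdual_mass A \<le> real (card W) * (dual_doubling_const^(J+1) * Vdual_mass T)"
    by (rule cover_bound(2)[OF dual_int _ dual_bound]) simp_all
  also have "\<dots> \<le> real m * (dual_doubling_const^(J+1) * Vdual_mass T)"
    using W(2) Vdual_mass_nonneg one_le_dual_doubling_const by (intro mult_right_mono) auto
  finally show "Vdual_mass A \<le> (real m * dual_doubling_const^(J+1)) * Vdual_mass T"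
    by (simp only: mult.assoc)
qed

lemma Ap_of_Qcube_cover:
  fixes x0 :: "real^'n"
  assumes s: "0 < s" and A: "A \<in> sets lborel" and W: "finite W" "card W \<le> m" "0 < m"
    and cov: "A \<subseteq> (\<Union>(y, j)\<in>W. Qcube (y, 2^j * s))"
    and near: "\<forall>(y, j)\<in>W. j \<le> J \<and> (\<forall>i. \<bar>y $ i - x0 $ i\<bar> \<le> 3 * (2^J * s) / 4)"
  defines "KV \<equiv> real m * doubling_const^(J+1)" and "KD \<equiv> real m * dual_doubling_const^(J+1)"
  shows "Vmass A * Vdual_mass A powr (p-1)
    \<le> KV * KD powr (p-1) * max 1 M * (2^(J+1) * s) powr ((real CARD('n) + 1) * p)"
proof -
  define T where "T = Qcube (x0, 2^(J+1) * s)"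
  have T: "(x0, 2^(J+1) * s) \<in> Hup" using s by (simp add: Hup_def)
  note masses = masses_le_of_Qcube_cover[OF s A W(1,2) cov near, folded T_def KV_def KD_def]
  have KV: "0 < KV" and KD: "0 < KD"
    using W(3) one_le_doubling_const one_le_dual_doubling_const by (simp_all add: KV_def KD_def)
  have VT: "0 \<le> Vmass T" unfolding T_def by (rule Vmass_nonneg[OF Qcube_subset_Hup[OF T]])
  have "Vdual_mass A powr (p-1) \<le> (KD * Vdual_mass T) powr (p-1)"
    using masses(3) p Vdual_mass_nonneg by (intro powr_mono2) auto
  then have "Vmass A * Vdual_mass A powr (p-1) \<le> (KV * Vmass T) * (KD * Vdual_mass T) powr (p-1)"
    using masses(2) KV VT by (intro mult_mono) auto
  also have "\<dots> = KV * KD powr (p-1) * (Vmass T * Vdual_mass T powr (p-1))"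
    using KD Vdual_mass_nonneg by (simp add: powr_mult)
  also have "\<dots> \<le> KV * KD powr (p-1) * (max 1 M * measure lborel T powr p)"
  proof (rule mult_left_mono)
    show "Vmass T * Vdual_mass T powr (p-1) \<le> max 1 M * measure lborel T powr p"
      using Qcube_Ap[OF T]
        mult_right_mono[OF max.cobounded2[of M 1] powr_ge_zero[of "measure lborel T" p]]
      unfolding T_def by linarith
  qed (use KV KD in simp)
  also have "measure lborel T powr p = (2^(J+1) * s) powr ((real CARD('n) + 1) * p)"
    unfolding T_def by (simp only: measure_Qcube_powr[OF T] snd_conv)
  finally show ?thesis by (simp only: mult.assoc)
qed

lemma whitney_cube_Ap:
  fixes \<beta> B :: real
  assumes \<beta>: "0 < \<beta>" and B: "0 < B"
  obtains A where "0 < A"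
    "\<And>c r. 0 < r \<Longrightarrow> \<beta> * r \<le> snd c - r \<Longrightarrow> snd c - r \<le> B * r \<Longrightarrow>
       set_integrable lborel (cube c r) Vdual"
    "\<And>c r. 0 < r \<Longrightarrow> \<beta> * r \<le> snd c - r \<Longrightarrow> snd c - r \<le> B * r \<Longrightarrow>
       Vmass (cube c r) * Vdual_mass (cube c r) powr (p-1) \<le> A * r powr ((real CARD('n) + 1) * p)"
proof -
  obtain m J :: nat where m: "0 < m" and cover: "\<forall>(x0::real^'n) h r. 0 < r \<longrightarrow> \<beta> * r \<le> h - r \<longrightarrow>
       h - r \<le> B * r \<longrightarrow> (\<exists>W. finite W \<and> card W \<le> m \<and>
         cube (x0, h) r \<subseteq> (\<Union>(y, j)\<in>W. Qcube (y, 2^j * (2*\<beta>*r))) \<and>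
         (\<forall>(y, j)\<in>W. j \<le> J \<and> (\<forall>i. \<bar>y $ i - x0 $ i\<bar> \<le> 3 * (2^J * (2*\<beta>*r)) / 4)))"
    using whitney_cube_Qcube_cover[OF \<beta> B] by blast
  define N where "N = real CARD('n) + 1"
  define A where "A = (real m * doubling_const^(J+1)) * (real m * dual_doubling_const^(J+1)) powr (p-1)
    * max 1 M * (2^(J+2) * \<beta>) powr (N * p)"
  have bounds: "set_integrable lborel (cube c r) Vdual \<and>
      Vmass (cube c r) * Vdual_mass (cube c r) powr (p-1) \<le> A * r powr (N * p)"
    if r: "0 < r" and lo: "\<beta> * r \<le> snd c - r" and hi: "snd c - r \<le> B * r" for c r
  proof -
    obtain x0 h where c: "c = (x0, h)" by fastforce
    with lo hi have lo: "\<beta> * r \<le> h - r" and hi: "h - r \<le> B * r" by simp_all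
    define s where "s = 2*\<beta>*r"
    have s: "0 < s" using \<beta> r by (simp add: s_def)
    obtain W where W: "finite W" "card W \<le> m"
      and cov: "cube c r \<subseteq> (\<Union>(y, j)\<in>W. Qcube (y, 2^j * s))"
      and near: "\<forall>(y, j)\<in>W. j \<le> J \<and> (\<forall>i. \<bar>y $ i - x0 $ i\<bar> \<le> 3 * (2^J * s) / 4)"
      using cover[rule_format, of r h x0, OF r lo hi, folded s_def c] by blast
    have "(2^(J+1) * s) powr (N * p) = (2^(J+2) * \<beta>) powr (N * p) * r powr (N * p)"
    proof -
      have "2^(J+1) * s = (2^(J+2) * \<beta>) * r" by (simp add: s_def)
      then show ?thesis using \<beta> r by (simp only:) (simp add: powr_mult)
    qed
    then show ?thesis
      using masses_le_of_Qcube_cover(1)[OF s cube_in_sets_lborel W cov near]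
        Ap_of_Qcube_cover[OF s cube_in_sets_lborel W m cov near]
      unfolding N_def A_def by (simp add: mult.assoc)
  qed
  show ?thesis
  proof (rule that[of A])
    show "0 < A" using m \<beta> one_le_doubling_const one_le_dual_doubling_const by (simp add: A_def)
  next
    fix c :: "'n pt" and r assume "0 < r" "\<beta> * r \<le> snd c - r" "snd c - r \<le> B * r"
    from bounds[OF this] show "set_integrable lborel (cube c r) Vdual" by (rule conjunct1)
  next
    fix c :: "'n pt" and r assume "0 < r" "\<beta> * r \<le> snd c - r" "snd c - r \<le> B * r"
    from bounds[OF this, unfolded N_def]
    show "Vmass (cube c r) * Vdual_mass (cube c r) powr (p-1) \<le> A * r powr ((real CARD('n) + 1) * p)"
      by (rule conjunct2)
  qed
qed

end

section \<open>The operators S^k\<close>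

lemma comparable_heights_ratio_powr_le:
  fixes \<beta> r u t s b :: real
  assumes \<beta>: "0 < \<beta>" and u: "0 < u" "\<beta> * r \<le> u"
    and t: "u \<le> t" "t \<le> u + 2*r" and s: "u \<le> s"
  shows "(s/(t+s)) powr b \<le> max 1 ((\<beta>/(2*\<beta>+2)) powr b)"
proof (cases "0 \<le> b")
  case True
  then have "(s/(t+s)) powr b \<le> 1" using u t s by (intro powr_le1) auto
  then show ?thesis by simp
next
  case False
  have "\<beta> * t \<le> \<beta> * (u + 2*r)" using t(2) \<beta> by (intro mult_left_mono) auto
  moreover have "\<beta> * u \<le> \<beta> * s" using s \<beta> by simp
  ultimately have "\<beta> * (t + s) \<le> s * (2*\<beta>+2)" using u s by (simp add: algebra_simps)
  then have "\<beta>/(2*\<beta>+2) \<le> s/(t+s)" using \<beta> u t s by (simp add: field_simps)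
  then have "(s/(t+s)) powr b \<le> (\<beta>/(2*\<beta>+2)) powr b" using False \<beta> by (intro powr_mono2') auto
  then show ?thesis by simp
qed

lemma reflected_kernel_bound:
  fixes \<beta> a b :: real
  assumes \<beta>: "0 < \<beta>" and a: "0 < a" and b: "-1 < b"
  obtains K where "0 < K"
    "\<And>(c::'n::finite pt) r z w. 0 < r \<Longrightarrow> \<beta> * r \<le> snd c - r \<Longrightarrow> z \<in> cube c r \<Longrightarrow> w \<in> cube c r \<Longrightarrow>
       snd z powr a * (snd w powr b / norm (z - reflect w) powr (real CARD('n) + 1 + a + b))
         \<le> K * r powr (-(real CARD('n) + 1))"
proof
  define N where "N = real CARD('n) + 1"
  show "0 < max 1 ((\<beta>/(2*\<beta>+2)) powr b) * (2*\<beta>) powr (-N)" using \<beta> by simp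
  fix c :: "'n pt" and r z w
  assume r: "0 < r" and lo: "\<beta> * r \<le> snd c - r" and z: "z \<in> cube c r" and w: "w \<in> cube c r"
  \<comment> \<open>The heights t, s of z, w lie in [u, u + 2r] with u \<ge> \<beta>r, and |z - reflect w| \<ge> t + s.\<close>
  define t s u where "t = snd z" and "s = snd w" and "u = snd c - r"
  have "\<beta> * r \<le> u" using lo by (simp add: u_def)
  moreover have "0 < \<beta> * r" using \<beta> r by simp
  ultimately have u: "\<beta> * r \<le> u" "0 < u" by linarith+
  have ts: "u \<le> t" "t \<le> u + 2*r" "u \<le> s" "s \<le> u + 2*r"
    using z w by (auto simp: mem_cube abs_le_iff t_def s_def u_def)
  have pos: "0 < t" "0 < s" "0 < t + s" "2*u \<le> t + s" using ts u by auto
  have E: "0 < N + a + b" using a b by (simp add: N_def)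
  have "t + s = norm (snd (z - reflect w))" using pos by (simp add: reflect_def t_def s_def)
  also have "\<dots> \<le> norm (z - reflect w)"
    using norm_snd_le[where x="fst (z - reflect w)" and y="snd (z - reflect w)"]
    by (simp only: prod.collapse)
  finally have dist: "t + s \<le> norm (z - reflect w)" .
  then have "0 < norm (z - reflect w)" using pos by linarith
  have "t powr a * (s powr b / norm (z - reflect w) powr (N + a + b))
      \<le> t powr a * (s powr b / (t + s) powr (N + a + b))"
    using dist pos E \<open>0 < norm (z - reflect w)\<close> by (intro mult_left_mono divide_left_mono powr_mono2) auto
  also have "\<dots> = (t/(t+s)) powr a * ((s/(t+s)) powr b * (t+s) powr (-N))"
    using pos by (simp add: powr_divide powr_add powr_minus field_simps)
  also have "\<dots> \<le> 1 * (max 1 ((\<beta>/(2*\<beta>+2)) powr b) * ((2*\<beta>) powr (-N) * r powr (-N)))"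
  proof (intro mult_mono)
    show "(t/(t+s)) powr a \<le> 1" using pos a by (intro powr_le1) auto
    show "(s/(t+s)) powr b \<le> max 1 ((\<beta>/(2*\<beta>+2)) powr b)"
      using \<beta> u ts by (intro comparable_heights_ratio_powr_le) auto
    have "(t+s) powr (-N) \<le> (2*\<beta>*r) powr (-N)"
      using pos u \<beta> r by (intro powr_mono2') (auto simp: N_def)
    then show "(t+s) powr (-N) \<le> (2*\<beta>) powr (-N) * r powr (-N)" using \<beta> r by (simp add: powr_mult)
  qed auto
  finally show "snd z powr a * (snd w powr b / norm (z - reflect w) powr (real CARD('n) + 1 + a + b))
      \<le> max 1 ((\<beta>/(2*\<beta>+2)) powr b) * (2*\<beta>) powr (-N) * r powr (-(real CARD('n) + 1))"
    by (simp add: t_def s_def N_def mult.assoc)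
qed

lemma reflected_kernel_measurable:
  "(\<lambda>w::'n::finite pt. snd w powr b / norm (z - reflect w) powr E) \<in> borel_measurable lborel"
proof -
  have "(\<lambda>w::'n pt. norm (z - reflect w)) \<in> borel_measurable borel"
    "(\<lambda>w::'n pt. snd w) \<in> borel_measurable borel"
    unfolding reflect_def by (intro borel_measurable_continuous_onI continuous_intros)+
  then have "(\<lambda>w::'n pt. snd w powr b / norm (z - reflect w) powr E) \<in> borel_measurable borel"
    by (intro borel_measurable_divide powr_real_measurable) auto
  then show ?thesis by simp
qed

lemma S_op_measurable:
  fixes \<Delta> :: "nat \<Rightarrow> 'n::finite pt set"
  assumes f: "set_borel_measurable lborel (\<Delta> k) f"
  shows "S_op a b \<Delta> k f \<in> borel_measurable lborel"
proof -
  define E where "E = real CARD('n) + 1 + a + b"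
  have "(\<lambda>x::'n pt \<times> 'n pt. norm (fst x - reflect (snd x))) \<in> borel_measurable borel"
    "(\<lambda>x::'n pt \<times> 'n pt. snd (snd x)) \<in> borel_measurable borel"
    unfolding reflect_def by (intro borel_measurable_continuous_onI continuous_intros)+
  then have "(\<lambda>x::'n pt \<times> 'n pt. snd (snd x) powr b / norm (fst x - reflect (snd x)) powr E)
      \<in> borel_measurable (lborel \<Otimes>\<^sub>M lborel)"
    by (simp add: lborel_prod borel_measurable_divide powr_real_measurable)
  moreover have "(\<lambda>x::'n pt \<times> 'n pt. indicator (\<Delta> k) (snd x) *\<^sub>R f (snd x))
      \<in> borel_measurable (lborel \<Otimes>\<^sub>M lborel)"
    using measurable_compose[OF measurable_snd f[unfolded set_borel_measurable_def]] by simp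
  ultimately have "(\<lambda>x. (snd (snd x) powr b / norm (fst x - reflect (snd x)) powr E)
      * (indicator (\<Delta> k) (snd x) *\<^sub>R f (snd x))) \<in> borel_measurable (lborel \<Otimes>\<^sub>M lborel)"
    by (rule borel_measurable_times)
  also have "(\<lambda>x. (snd (snd x) powr b / norm (fst x - reflect (snd x)) powr E)
      * (indicator (\<Delta> k) (snd x) *\<^sub>R f (snd x)))
    = case_prod (\<lambda>z w. indicator (\<Delta> k) w *\<^sub>R (snd w powr b * f w / norm (z - reflect w) powr E))"
    by (auto simp: fun_eq_iff indicator_def)
  finally have "(\<lambda>z. LINT w:\<Delta> k|lborel. snd w powr b * f w / norm (z - reflect w) powr E)
      \<in> borel_measurable lborel"
    unfolding set_lebesgue_integral_def by (rule lborel.borel_measurable_lebesgue_integral)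
  moreover have "(\<lambda>z::'n pt. snd z) \<in> borel_measurable borel"
    by (intro borel_measurable_continuous_onI continuous_intros)
  then have "(\<lambda>z::'n pt. snd z powr a) \<in> borel_measurable lborel"
    by (simp add: powr_real_measurable)
  ultimately show ?thesis unfolding S_op_def E_def by (intro borel_measurable_times)
qed

text \<open>A Bochner integral of a non-integrable function is 0, so S_op vanishes on the cube
  when f is not measurable there.\<close>

lemma S_op_eq_0_if_not_measurable:
  fixes \<Delta> :: "nat \<Rightarrow> 'n::finite pt set"
  assumes f: "\<not> set_borel_measurable lborel (\<Delta> k) f" and D: "\<Delta> k \<subseteq> Hup" and z: "z \<in> Hup"
  shows "S_op a b \<Delta> k f z = 0"
proof -
  define E where "E = real CARD('n) + 1 + a + b"
  define g where "g w = snd w powr b * f w / norm (z - reflect w) powr E" for w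
  have pos: "0 < snd w" "0 < norm (z - reflect w)" if "w \<in> \<Delta> k" for w
  proof -
    have "0 < snd z" "0 < snd w" using that D z by (auto simp: Hup_def)
    moreover have "norm (snd (z - reflect w)) \<le> norm (z - reflect w)"
      using norm_snd_le[where x="fst (z - reflect w)" and y="snd (z - reflect w)"]
      by (simp only: prod.collapse)
    ultimately show "0 < snd w" "0 < norm (z - reflect w)" by (auto simp: reflect_def)
  qed
  have "\<not> set_integrable lborel (\<Delta> k) g"
  proof
    assume "set_integrable lborel (\<Delta> k) g"
    then have "(\<lambda>w. indicator (\<Delta> k) w *\<^sub>R g w) \<in> borel_measurable lborel"
      unfolding set_integrable_def by (rule borel_measurable_integrable)
    moreover have "(\<lambda>w. inverse (snd w powr b / norm (z - reflect w) powr E)) \<in> borel_measurable lborel"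
      using reflected_kernel_measurable by (rule borel_measurable_inverse)
    ultimately have "(\<lambda>w. (indicator (\<Delta> k) w *\<^sub>R g w) * inverse (snd w powr b / norm (z - reflect w) powr E))
        \<in> borel_measurable lborel"
      by (rule borel_measurable_times)
    also have "(\<lambda>w. (indicator (\<Delta> k) w *\<^sub>R g w) * inverse (snd w powr b / norm (z - reflect w) powr E))
        = (\<lambda>w. indicator (\<Delta> k) w *\<^sub>R f w)"
    proof
      fix w
      show "(indicator (\<Delta> k) w *\<^sub>R g w) * inverse (snd w powr b / norm (z - reflect w) powr E)
          = indicator (\<Delta> k) w *\<^sub>R f w"
      proof (cases "w \<in> \<Delta> k")
        case True
        then have "snd w powr b \<noteq> 0" "norm (z - reflect w) powr E \<noteq> 0" using pos[OF True] by auto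
        then show ?thesis using True by (simp add: g_def field_simps)
      qed simp
    qed
    finally show False using f by (simp add: set_borel_measurable_def)
  qed
  then show ?thesis
    by (simp add: S_op_def g_def E_def set_lebesgue_integral_def set_integrable_def not_integrable_integral_eq)
qed

lemma abs_S_op_le:
  fixes \<Delta> :: "nat \<Rightarrow> 'n::finite pt set"
  assumes z: "0 < snd z" and f_meas: "set_borel_measurable lborel (\<Delta> k) f"
    and f_int: "set_integrable lborel (\<Delta> k) (\<lambda>w. \<bar>f w\<bar>)"
    and kernel: "\<And>w. w \<in> \<Delta> k \<Longrightarrow>
      snd z powr a * (snd w powr b / norm (z - reflect w) powr (real CARD('n) + 1 + a + b)) \<le> L"
  shows "\<bar>S_op a b \<Delta> k f z\<bar> \<le> L * (LINT w:\<Delta> k|lborel. \<bar>f w\<bar>)"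
proof -
  define E where "E = real CARD('n) + 1 + a + b"
  define \<kappa> where "\<kappa> w = snd w powr b / norm (z - reflect w) powr E" for w
  define g where "g w = snd w powr b * f w / norm (z - reflect w) powr E" for w
  define c where "c = L / snd z powr a"
  have g: "g w = \<kappa> w * f w" for w by (simp add: g_def \<kappa>_def)
  have g_le: "\<bar>g w\<bar> \<le> c * \<bar>f w\<bar>" if "w \<in> \<Delta> k" for w
  proof -
    have "0 \<le> \<kappa> w" by (simp add: \<kappa>_def)
    then have "\<bar>g w\<bar> = \<kappa> w * \<bar>f w\<bar>" by (simp add: g abs_mult)
    also have "\<kappa> w \<le> c" using kernel[OF that] z by (simp add: c_def \<kappa>_def E_def field_simps)
    then have "\<kappa> w * \<bar>f w\<bar> \<le> c * \<bar>f w\<bar>" by (rule mult_right_mono) simp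
    finally show ?thesis .
  qed
  have c_int: "set_integrable lborel (\<Delta> k) (\<lambda>w. c * \<bar>f w\<bar>)" using f_int by simp
  have "(\<lambda>w. \<kappa> w * (indicator (\<Delta> k) w *\<^sub>R f w)) \<in> borel_measurable lborel"
    using reflected_kernel_measurable f_meas unfolding set_borel_measurable_def \<kappa>_def
    by (rule borel_measurable_times)
  also have "(\<lambda>w. \<kappa> w * (indicator (\<Delta> k) w *\<^sub>R f w)) = (\<lambda>w. indicator (\<Delta> k) w *\<^sub>R g w)"
    by (auto simp: fun_eq_iff g indicator_def)
  finally have g_meas: "set_borel_measurable lborel (\<Delta> k) g"
    unfolding set_borel_measurable_def .
  have g_int: "set_integrable lborel (\<Delta> k) g"
  proof (rule set_integrable_bound[OF c_int g_meas], intro AE_I2 impI)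
    fix w assume "w \<in> \<Delta> k"
    then show "norm (g w) \<le> norm (c * \<bar>f w\<bar>)"
      using g_le abs_ge_self[of "c * \<bar>f w\<bar>"] unfolding real_norm_def by fastforce
  qed
  have "\<bar>LINT w:\<Delta> k|lborel. g w\<bar> \<le> (LINT w:\<Delta> k|lborel. \<bar>g w\<bar>)"
    using set_integral_norm_bound[OF g_int] by simp
  also have "\<dots> \<le> (LINT w:\<Delta> k|lborel. c * \<bar>f w\<bar>)"
    using set_integrable_abs[OF g_int] c_int g_le by (rule set_integral_mono)
  finally have "snd z powr a * \<bar>LINT w:\<Delta> k|lborel. g w\<bar> \<le> snd z powr a * (c * (LINT w:\<Delta> k|lborel. \<bar>f w\<bar>))"
    by (intro mult_left_mono) auto
  then show ?thesis using z by (simp add: S_op_def g_def E_def c_def abs_mult)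
qed

context MH_weight
begin

lemma S_op_Holder_bound:
  fixes \<Delta> :: "nat \<Rightarrow> 'n pt set"
  assumes D: "compact (\<Delta> k)" "\<Delta> k \<subseteq> Hup" and dual: "set_integrable lborel (\<Delta> k) Vdual"
    and kernel: "\<And>z w. z \<in> \<Delta> k \<Longrightarrow> w \<in> \<Delta> k \<Longrightarrow>
      snd z powr a * (snd w powr b / norm (z - reflect w) powr (real CARD('n) + 1 + a + b)) \<le> L"
    and f: "set_integrable lborel (\<Delta> k) (\<lambda>z. \<bar>f z\<bar> powr p * V z)"
  obtains I where "0 \<le> I"
    "I powr p \<le> (LINT z:\<Delta> k|lborel. \<bar>f z\<bar> powr p * V z) * Vdual_mass (\<Delta> k) powr (p-1)"
    "\<And>z. z \<in> \<Delta> k \<Longrightarrow> \<bar>S_op a b \<Delta> k f z\<bar> \<le> L * I"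
    "set_borel_measurable lborel (\<Delta> k) (S_op a b \<Delta> k f)"
proof (cases "set_borel_measurable lborel (\<Delta> k) f")
  case False
  have S0: "S_op a b \<Delta> k f z = 0" if "z \<in> \<Delta> k" for z
    using that D(2) S_op_eq_0_if_not_measurable[where \<Delta> = \<Delta> and k = k and f = f, OF False D(2)]
    by blast
  have "(\<lambda>z. indicator (\<Delta> k) z *\<^sub>R S_op a b \<Delta> k f z) = (\<lambda>_. 0)"
    using S0 by (auto simp: fun_eq_iff indicator_def)
  then have "set_borel_measurable lborel (\<Delta> k) (S_op a b \<Delta> k f)"
    by (simp add: set_borel_measurable_def)
  moreover have "0 \<le> (LINT z:\<Delta> k|lborel. \<bar>f z\<bar> powr p * V z)"
    by (rule set_integral_nonneg) (use D(2) V_nonneg in auto)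
  ultimately show ?thesis using S0 p by (intro that[of 0]) auto
next
  case True
  have D_sets: "\<Delta> k \<in> sets lborel" using D(1) by (simp add: compact_imp_closed)
  have "set_borel_measurable lborel (\<Delta> k) (\<lambda>w. \<bar>f w\<bar>)"
    using borel_measurable_abs[OF True[unfolded set_borel_measurable_def]]
    by (simp add: set_borel_measurable_def indicator_def abs_mult if_distrib cong: if_cong)
  note Holder = weighted_Holder_inequality[OF p D_sets _ _ this f dual]
  have V: "\<And>x. x \<in> \<Delta> k \<Longrightarrow> 0 < V x" using D(2) V_pos by blast
  have I_int: "set_integrable lborel (\<Delta> k) (\<lambda>w. \<bar>f w\<bar>)" using Holder(1)[OF V] by simp
  show ?thesis
  proof (rule that[of "LINT w:\<Delta> k|lborel. \<bar>f w\<bar>"])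
    show "0 \<le> (LINT w:\<Delta> k|lborel. \<bar>f w\<bar>)" by (rule set_integral_nonneg) simp
    show "(LINT w:\<Delta> k|lborel. \<bar>f w\<bar>) powr p
        \<le> (LINT z:\<Delta> k|lborel. \<bar>f z\<bar> powr p * V z) * Vdual_mass (\<Delta> k) powr (p-1)"
      using Holder(2)[OF V] by simp
    show "\<bar>S_op a b \<Delta> k f z\<bar> \<le> L * (LINT w:\<Delta> k|lborel. \<bar>f w\<bar>)" if "z \<in> \<Delta> k" for z
      using that D(2) by (intro abs_S_op_le True I_int kernel) (auto simp: Hup_def)
    show "set_borel_measurable lborel (\<Delta> k) (S_op a b \<Delta> k f)"
      using S_op_measurable[where \<Delta> = \<Delta> and k = k, OF True] D_sets
      unfolding set_borel_measurable_def by measurable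
  qed
qed

lemma S_op_weighted_estimate:
  fixes \<Delta> :: "nat \<Rightarrow> 'n pt set"
  assumes D: "compact (\<Delta> k)" "\<Delta> k \<subseteq> Hup" and dual: "set_integrable lborel (\<Delta> k) Vdual"
    and Ap: "Vmass (\<Delta> k) * Vdual_mass (\<Delta> k) powr (p-1) \<le> A" and L: "0 \<le> L"
    and kernel: "\<And>z w. z \<in> \<Delta> k \<Longrightarrow> w \<in> \<Delta> k \<Longrightarrow>
      snd z powr a * (snd w powr b / norm (z - reflect w) powr (real CARD('n) + 1 + a + b)) \<le> L"
    and f: "set_integrable lborel (\<Delta> k) (\<lambda>z. \<bar>f z\<bar> powr p * V z)"
  shows "set_integrable lborel (\<Delta> k) (\<lambda>z. \<bar>S_op a b \<Delta> k f z\<bar> powr p * V z) \<and>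
    (LINT z:\<Delta> k|lborel. \<bar>S_op a b \<Delta> k f z\<bar> powr p * V z)
      \<le> L powr p * A * (LINT z:\<Delta> k|lborel. \<bar>f z\<bar> powr p * V z)"
proof -
  define X where "X = (LINT z:\<Delta> k|lborel. \<bar>f z\<bar> powr p * V z)"
  obtain I where I: "0 \<le> I" and I_Holder: "I powr p \<le> X * Vdual_mass (\<Delta> k) powr (p-1)"
    and S_le: "\<And>z. z \<in> \<Delta> k \<Longrightarrow> \<bar>S_op a b \<Delta> k f z\<bar> \<le> L * I"
    and S_meas: "set_borel_measurable lborel (\<Delta> k) (S_op a b \<Delta> k f)"
    unfolding X_def by (rule S_op_Holder_bound[where \<Delta> = \<Delta> and k = k, OF D dual _ f]) (blast intro: kernel that)+
  have X: "0 \<le> X" unfolding X_def by (rule set_integral_nonneg) (use D(2) V_nonneg in auto)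
  note SV = set_integral_powr_weight_le[OF S_meas V_integrable[OF D] _ S_le, of p]
  have "(LINT z:\<Delta> k|lborel. \<bar>S_op a b \<Delta> k f z\<bar> powr p * V z) \<le> (L * I) powr p * Vmass (\<Delta> k)"
    using SV(2) D(2) V_nonneg p by auto
  also have "\<dots> = L powr p * I powr p * Vmass (\<Delta> k)" using L I by (simp add: powr_mult)
  also have "\<dots> \<le> L powr p * (X * Vdual_mass (\<Delta> k) powr (p-1)) * Vmass (\<Delta> k)"
    using I_Holder Vmass_nonneg[OF D(2)] by (intro mult_right_mono mult_left_mono) auto
  also have "\<dots> = L powr p * X * (Vmass (\<Delta> k) * Vdual_mass (\<Delta> k) powr (p-1))" by simp
  also have "\<dots> \<le> L powr p * X * A" using Ap X by (intro mult_left_mono) auto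
  finally show ?thesis using SV(1) D(2) V_nonneg p by (auto simp: X_def mult_ac)
qed

lemma whitney_S_op_estimate:
  fixes \<Delta> :: "nat \<Rightarrow> 'n pt set"
  assumes W: "whitney_family \<Delta>" and a: "0 < a" and b: "-1 < b"
  shows "\<exists>C>0. \<forall>f k. set_integrable lborel (\<Delta> k) (\<lambda>z. \<bar>f z\<bar> powr p * V z) \<longrightarrow>
    set_integrable lborel (\<Delta> k) (\<lambda>z. \<bar>S_op a b \<Delta> k f z\<bar> powr p * V z) \<and>
    (LINT z:\<Delta> k|lborel. \<bar>S_op a b \<Delta> k f z\<bar> powr p * V z) \<le> C * (LINT z:\<Delta> k|lborel. \<bar>f z\<bar> powr p * V z)"
proof -
  obtain r c \<beta> B where r: "\<And>k. 0 < r k" and D: "\<And>k. \<Delta> k = cube (c k) (r k)" and \<beta>: "0 < \<beta>"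
    and B: "0 < B" and lo: "\<And>k. \<beta> * r k \<le> snd (c k) - r k" and hi: "\<And>k. snd (c k) - r k \<le> B * r k"
    by (rule whitney_family_cubes[OF W]) (rule that)
  obtain A where A: "0 < A"
    and dual: "\<And>c r. 0 < r \<Longrightarrow> \<beta> * r \<le> snd c - r \<Longrightarrow> snd c - r \<le> B * r \<Longrightarrow>
       set_integrable lborel (cube c r) Vdual"
    and Ap: "\<And>c r. 0 < r \<Longrightarrow> \<beta> * r \<le> snd c - r \<Longrightarrow> snd c - r \<le> B * r \<Longrightarrow>
       Vmass (cube c r) * Vdual_mass (cube c r) powr (p-1) \<le> A * r powr ((real CARD('n) + 1) * p)"
    by (rule whitney_cube_Ap[OF \<beta> B]) (rule that)
  obtain K where K: "0 < K"
    and kernel: "\<And>(c::'n pt) r z w. 0 < r \<Longrightarrow> \<beta> * r \<le> snd c - r \<Longrightarrow> z \<in> cube c r \<Longrightarrow> w \<in> cube c r \<Longrightarrow>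
       snd z powr a * (snd w powr b / norm (z - reflect w) powr (real CARD('n) + 1 + a + b))
         \<le> K * r powr (-(real CARD('n) + 1))"
    by (rule reflected_kernel_bound[OF \<beta> a b]) (rule that)
  define N where "N = real CARD('n) + 1"
  have "set_integrable lborel (\<Delta> k) (\<lambda>z. \<bar>S_op a b \<Delta> k f z\<bar> powr p * V z) \<and>
    (LINT z:\<Delta> k|lborel. \<bar>S_op a b \<Delta> k f z\<bar> powr p * V z) \<le> K powr p * A * (LINT z:\<Delta> k|lborel. \<bar>f z\<bar> powr p * V z)"
    if f: "set_integrable lborel (\<Delta> k) (\<lambda>z. \<bar>f z\<bar> powr p * V z)" for f k
  proof -
    have scale: "(K * r k powr (-N)) powr p * (A * r k powr (N * p)) = K powr p * A"
      using K r[of k] by (simp add: powr_mult powr_powr flip: powr_add)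
    have Dk: "compact (\<Delta> k)" "\<Delta> k \<subseteq> Hup"
      using whitney_family_subset_Hup[OF W] by (simp_all add: D compact_cube)
    have dual_k: "set_integrable lborel (\<Delta> k) Vdual" using dual[OF r lo hi] by (simp add: D)
    have Ap_k: "Vmass (\<Delta> k) * Vdual_mass (\<Delta> k) powr (p-1) \<le> A * r k powr (N * p)"
      using Ap[OF r lo hi] by (simp add: D N_def)
    have L: "0 \<le> K * r k powr (-N)" using K by simp
    have kernel_k: "snd z powr a * (snd w powr b / norm (z - reflect w) powr (real CARD('n) + 1 + a + b))
        \<le> K * r k powr (-N)" if "z \<in> \<Delta> k" "w \<in> \<Delta> k" for z w
      using kernel[OF r lo] that by (simp add: D N_def)
    show ?thesis
      using S_op_weighted_estimate[where \<Delta> = \<Delta> and k = k, OF Dk dual_k Ap_k L kernel_k f]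
      unfolding scale .
  qed
  then show ?thesis using K A by (intro exI[of _ "K powr p * A"]) auto
qed

end

lemma MH_weight_if_MH:
  fixes V :: "'n::finite pt \<Rightarrow> real"
  assumes "MH p V" and p: "1 < p"
  obtains M where "MH_weight p V M"
proof -
  have pq: "p / (p / (p - 1)) = p - 1" using p by (simp add: field_simps)
  from assms(1) obtain M where M: "\<forall>w\<in>Hup.
      ((LINT z:Qcube w|lborel. V z) / measure lborel (Qcube w)) *
      ((LINT z:Qcube w|lborel. V z powr (- (p / (p - 1)) / p)) / measure lborel (Qcube w)) powr (p - 1) \<le> M"
    unfolding MH_def Let_def pq by blast
  have "MH_weight p V M"
    using assms(1) p M unfolding MH_def Let_def by unfold_locales blast+
  then show ?thesis by (rule that)
qed

theorem mainTheorem1: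
  fixes \<Delta> :: "nat \<Rightarrow> 'n::finite pt set"
    and V :: "'n pt \<Rightarrow> real"
    and a b \<sigma> p :: real
  assumes "whitney_family \<Delta>"
    and "a > 0" and "b > -1" and "0 < \<sigma>" and "1 < p"
    and "MH p V"
  shows "\<exists>C>0. \<forall>f :: 'n pt \<Rightarrow> real.
           Lp_loc p f
           \<and> (\<forall>k. set_integrable lborel (\<Delta> k) (\<lambda>z. \<bar>f z\<bar> powr p * V z))
           \<and> summable (\<lambda>k. (LINT z:\<Delta> k|lborel. \<bar>f z\<bar> powr p * V z) powr (\<sigma> / p))
           \<longrightarrow>
             (\<forall>k. set_integrable lborel (\<Delta> k) (\<lambda>z. \<bar>S_op a b \<Delta> k f z\<bar> powr p * V z))
           \<and> summable (\<lambda>k. (LINT z:\<Delta> k|lborel. \<bar>S_op a b \<Delta> k f z\<bar> powr p * V z) powr (\<sigma> / p))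
           \<and> (\<Sum>k. (LINT z:\<Delta> k|lborel. \<bar>S_op a b \<Delta> k f z\<bar> powr p * V z) powr (\<sigma> / p))
               \<le> C * (\<Sum>k. (LINT z:\<Delta> k|lborel. \<bar>f z\<bar> powr p * V z) powr (\<sigma> / p))"
proof -
  obtain M where "MH_weight p V M" using MH_weight_if_MH[OF assms(6,5)] by blast
  then interpret MH_weight p V M .
  obtain C where C: "0 < C" and estimate: "\<forall>f k. set_integrable lborel (\<Delta> k) (\<lambda>z. \<bar>f z\<bar> powr p * V z) \<longrightarrow>
      set_integrable lborel (\<Delta> k) (\<lambda>z. \<bar>S_op a b \<Delta> k f z\<bar> powr p * V z) \<and>
      (LINT z:\<Delta> k|lborel. \<bar>S_op a b \<Delta> k f z\<bar> powr p * V z) \<le> C * (LINT z:\<Delta> k|lborel. \<bar>f z\<bar> powr p * V z)"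
    using whitney_S_op_estimate[OF assms(1-3)] by blast
  have weighted_nonneg: "0 \<le> (LINT z:\<Delta> k|lborel. \<bar>g z\<bar> powr p * V z)" for g k
    using whitney_family_subset_Hup[OF assms(1)] V_nonneg by (intro set_integral_nonneg mult_nonneg_nonneg) auto
  show ?thesis
  proof (intro exI[of _ "C powr (\<sigma>/p)"] conjI allI impI)
    show "0 < C powr (\<sigma>/p)" using C by simp
    fix f :: "'n pt \<Rightarrow> real"
    assume "Lp_loc p f \<and> (\<forall>k. set_integrable lborel (\<Delta> k) (\<lambda>z. \<bar>f z\<bar> powr p * V z))
      \<and> summable (\<lambda>k. (LINT z:\<Delta> k|lborel. \<bar>f z\<bar> powr p * V z) powr (\<sigma> / p))"
    then have f_int: "\<And>k. set_integrable lborel (\<Delta> k) (\<lambda>z. \<bar>f z\<bar> powr p * V z)"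
      and f_sum: "summable (\<lambda>k. (LINT z:\<Delta> k|lborel. \<bar>f z\<bar> powr p * V z) powr (\<sigma> / p))" by auto
    note est = estimate[rule_format, OF f_int]
    show "set_integrable lborel (\<Delta> k) (\<lambda>z. \<bar>S_op a b \<Delta> k f z\<bar> powr p * V z)" for k
      using est by blast
    note sums = summable_powr_comparison[OF _ _ weighted_nonneg weighted_nonneg est[THEN conjunct2] f_sum]
    show "summable (\<lambda>k. (LINT z:\<Delta> k|lborel. \<bar>S_op a b \<Delta> k f z\<bar> powr p * V z) powr (\<sigma> / p))"
      using sums(1) assms(4,5) C by simp
    show "(\<Sum>k. (LINT z:\<Delta> k|lborel. \<bar>S_op a b \<Delta> k f z\<bar> powr p * V z) powr (\<sigma> / p))
        \<le> C powr (\<sigma>/p) * (\<Sum>k. (LINT z:\<Delta> k|lborel. \<bar>f z\<bar> powr p * V z) powr (\<sigma> / p))"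
      using sums(2) assms(4,5) C by simp
  qed
qed

end
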